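(* Let $H$ be a Hilbert space, let $\mathbf{a}=[a_1,\dots,a_\ell]$ be a row and $\mathbf{b}=[b_1,\dots,b_\ell]^t$ a column of operators $a_j,b_j\in\mathcal{B}(H)$, and let $Tx=\sum_{j=1}^\ell a_jxb_j$ ($x\in\mathcal{B}(H)$). Then \[ \|T\|=\sup\left\{\operatorname{tgm}\big(Q(\mathbf{a}^*,\xi),Q(\mathbf{b},\eta)\big):\xi,\eta\in H,\ \|\xi\|=\|\eta\|=1\right\}. \]
   Context: For a column $\mathbf{c}=[c_1,\dots,c_\ell]^t$ of operators in $\mathcal{B}(H)$ and $\eta\in H$, $Q(\mathbf{c},\eta)=(\langle c_i^*c_j\eta,\eta\rangle)_{i,j=1}^\ell=(\langle c_j\eta,c_i\eta\rangle)_{i,j=1}^\ell\in M_\ell(\mathbb{C})$; $\mathbf{a}^*$ denotes the column $[a_1^*,\dots,a_\ell^*]^t$, so $Q(\mathbf{a}^*,\xi)=(\langle a_j^*\xi,a_i^*\xi\rangle)_{i,j=1}^\ell$. For positive semidefinite $\ell\times\ell$ matrices $X,Y$, the tracial geometric mean is $\operatorname{tgm}(X,Y)=\operatorname{trace}\sqrt{\sqrt{X}\,Y\sqrt{X}}$ (positive semidefinite square roots). $\|T\|$ is the operator norm of $T$ on $\mathcal{B}(H)$. *)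

theory Defs
  imports "HOL-Analysis.Analysis"
begin

text \<open>HOL-Analysis only provides real inner product spaces, so complex
  (pre-)Hilbert spaces are introduced as a type class.  Convention: the inner
  product is linear in the FIRST argument and conjugate linear in the second.\<close>

class complex_vector = real_vector +
  fixes scaleC :: "complex \<Rightarrow> 'a \<Rightarrow> 'a"
  assumes scaleC_add_right: "scaleC c (x + y) = scaleC c x + scaleC c y"
    and scaleC_add_left: "scaleC (c + d) x = scaleC c x + scaleC d x"
    and scaleC_scaleC: "scaleC c (scaleC d x) = scaleC (c * d) x"
    and scaleC_one: "scaleC 1 x = x"
    and scaleR_scaleC: "scaleR r x = scaleC (complex_of_real r) x"

class complex_inner = complex_vector + real_normed_vector +
  fixes cinner :: "'a \<Rightarrow> 'a \<Rightarrow> complex"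
  assumes cinner_add_left: "cinner (x + y) z = cinner x z + cinner y z"
    and cinner_scaleC_left: "cinner (scaleC c x) y = c * cinner x y"
    and cinner_commute: "cinner y x = cnj (cinner x y)"
    and cinner_ge_zero: "0 \<le> Re (cinner x x)"
    and cinner_eq_zero_iff: "cinner x x = 0 \<longleftrightarrow> x = 0"
    and norm_eq_sqrt_cinner: "norm x = sqrt (Re (cinner x x))"

instantiation complex :: complex_inner
begin
definition scaleC_complex_def: "scaleC c (x::complex) = c * x"
definition cinner_complex_def: "cinner (x::complex) y = x * cnj y"
instance
proof
  fix x y z :: complex and c d :: complex and r :: real
  show "scaleC c (x + y) = scaleC c x + scaleC c y" by (simp add: scaleC_complex_def algebra_simps)
  show "scaleC (c + d) x = scaleC c x + scaleC d x" by (simp add: scaleC_complex_def algebra_simps)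
  show "scaleC c (scaleC d x) = scaleC (c * d) x" by (simp add: scaleC_complex_def algebra_simps)
  show "scaleC 1 x = x" by (simp add: scaleC_complex_def)
  show "scaleR r x = scaleC (complex_of_real r) x" by (simp add: scaleC_complex_def scaleR_conv_of_real)
  show "cinner (x + y) z = cinner x z + cinner y z" by (simp add: cinner_complex_def algebra_simps)
  show "cinner (scaleC c x) y = c * cinner x y" by (simp add: cinner_complex_def scaleC_complex_def)
  show "cinner y x = cnj (cinner x y)" by (simp add: cinner_complex_def)
  show "0 \<le> Re (cinner x x)" by (simp add: cinner_complex_def complex_mult_cnj)
  show "(cinner x x = 0) = (x = 0)" by (simp add: cinner_complex_def)
  show "norm x = sqrt (Re (cinner x x))"
    by (simp add: cinner_complex_def complex_mult_cnj cmod_def)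
qed
end

definition bop :: "('h::complex_inner \<Rightarrow> 'h) \<Rightarrow> bool" where
  "bop f \<longleftrightarrow> bounded_linear f \<and> (\<forall>c x. f (scaleC c x) = scaleC c (f x))"

definition adj :: "('h::complex_inner \<Rightarrow> 'h) \<Rightarrow> ('h \<Rightarrow> 'h)" where
  "adj f = (THE g. \<forall>x y. cinner (f x) y = cinner x (g y))"

definition superop_norm :: "(('h::complex_inner \<Rightarrow> 'h) \<Rightarrow> ('h \<Rightarrow> 'h)) \<Rightarrow> real" where
  "superop_norm T = Sup {onorm (T x) | x. bop x \<and> onorm x \<le> 1}"

definition elem_op :: "('l::finite \<Rightarrow> 'h \<Rightarrow> 'h) \<Rightarrow> ('l \<Rightarrow> 'h \<Rightarrow> 'h) \<Rightarrow> ('h \<Rightarrow> 'h) \<Rightarrow> ('h \<Rightarrow> 'h::complex_inner)" where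
  "elem_op a b x = (\<lambda>v. \<Sum>j\<in>UNIV. a j (x (b j v)))"

definition Qmat :: "('l::finite \<Rightarrow> 'h::complex_inner \<Rightarrow> 'h) \<Rightarrow> 'h \<Rightarrow> complex^'l^'l" where
  "Qmat c \<eta> = (\<chi> i j. cinner (c j \<eta>) (c i \<eta>))"

definition mat_adjoint :: "complex^'n^'n \<Rightarrow> complex^'n^'n" where
  "mat_adjoint X = (\<chi> i j. cnj (X $ j $ i))"

definition psd_mat :: "complex^'n^'n \<Rightarrow> bool" where
  "psd_mat X \<longleftrightarrow> mat_adjoint X = X \<and>
     (\<forall>v::complex^'n. 0 \<le> Re (\<Sum>i\<in>UNIV. \<Sum>j\<in>UNIV. cnj (v $ i) * X $ i $ j * v $ j))"

definition psd_sqrt :: "complex^'n^'n \<Rightarrow> complex^'n^'n" where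
  "psd_sqrt X = (THE R. psd_mat R \<and> R ** R = X)"

definition mat_trace :: "complex^'n^'n \<Rightarrow> complex" where
  "mat_trace X = (\<Sum>i\<in>UNIV. X $ i $ i)"

text \<open>tgm(X,Y) = trace sqrt(sqrt X * Y * sqrt X) (a real number for psd X, Y).\<close>
definition tgm :: "complex^'n^'n \<Rightarrow> complex^'n^'n \<Rightarrow> real" where
  "tgm X Y = Re (mat_trace (psd_sqrt (psd_sqrt X ** Y ** psd_sqrt X)))"

end

theory Submission
  imports Defs
begin

text \<open>For \<open>u\<^sub>j = b\<^sub>j \<eta>\<close> and \<open>v\<^sub>j = a\<^sub>j\<^sup>* \<xi>\<close> we have
  \<open>\<langle>T x \<eta>, \<xi>\<rangle> = \<Sum>\<^sub>j \<langle>x u\<^sub>j, v\<^sub>j\<rangle>\<close>, and the Gram matrices of \<open>u\<close> and \<open>v\<close> are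
  \<open>Q(b, \<eta>)\<close> and \<open>Q(a\<^sup>*, \<xi>)\<close>. Polar decomposition of the synthesis operators of \<open>u\<close> and
  \<open>v\<close> turns this sum into \<open>trace (C Q(b, \<eta>)\<^sup>1\<^sup>/\<^sup>2 Q(a\<^sup>*, \<xi>)\<^sup>1\<^sup>/\<^sup>2)\<close> with a contraction
  \<open>C\<close> determined by \<open>x\<close>. Hence its supremum over contractions \<open>x\<close> is the trace norm of
  \<open>Q(b, \<eta>)\<^sup>1\<^sup>/\<^sup>2 Q(a\<^sup>*, \<xi>)\<^sup>1\<^sup>/\<^sup>2\<close>, which is exactly the tracial geometric mean, and the
  supremum is attained. Taking suprema over unit vectors \<open>\<xi>, \<eta>\<close> gives \<open>\<parallel>T\<parallel>\<close>.\<close>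

context complex_vector begin

lemma scaleC_zero_left [simp]: "scaleC 0 x = 0"
proof -
  have "scaleC 0 x = scaleC 0 x + scaleC 0 x" using scaleC_add_left[of 0 0 x] by simp
  then show ?thesis by simp
qed

lemma scaleC_zero_right [simp]: "scaleC c 0 = 0"
proof -
  have "scaleC c 0 = scaleC c 0 + scaleC c 0" using scaleC_add_right[of c 0 0] by simp
  then show ?thesis by simp
qed

lemma scaleC_minus_left: "scaleC (- c) x = - scaleC c x"
  using scaleC_add_left[of c "-c" x] by (simp add: eq_neg_iff_add_eq_0 add.commute)

lemma scaleC_minus_right: "scaleC c (- x) = - scaleC c x"
  using scaleC_add_right[of c x "-x"] by (simp add: eq_neg_iff_add_eq_0 add.commute)

lemma scaleC_diff_right: "scaleC c (x - y) = scaleC c x - scaleC c y"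
  using scaleC_add_right[of c x "-y"] by (simp add: scaleC_minus_right)

lemma scaleC_sum_right: "scaleC c (sum f A) = (\<Sum>i\<in>A. scaleC c (f i))"
  by (induction A rule: infinite_finite_induct) (auto simp: scaleC_add_right)

end

context complex_inner begin

lemma cinner_add_right: "cinner x (y + z) = cinner x y + cinner x z"
  by (metis cinner_add_left cinner_commute complex_cnj_add)

lemma cinner_scaleC_right: "cinner x (scaleC c y) = cnj c * cinner x y"
  by (metis cinner_scaleC_left cinner_commute complex_cnj_mult)

lemma cinner_zero_left [simp]: "cinner 0 x = 0"
  using cinner_scaleC_left[of 0 0 x] by simp

lemma cinner_zero_right [simp]: "cinner x 0 = 0"
  using cinner_scaleC_right[of x 0 0] by simp

lemma cinner_minus_left: "cinner (- x) y = - cinner x y"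
  using cinner_scaleC_left[of "-1" x y] by (simp add: scaleC_minus_left scaleC_one)

lemma cinner_minus_right: "cinner x (- y) = - cinner x y"
  using cinner_scaleC_right[of x "-1" y] by (simp add: scaleC_minus_left scaleC_one)

lemma cinner_diff_left: "cinner (x - y) z = cinner x z - cinner y z"
  using cinner_add_left[of x "-y" z] by (simp add: cinner_minus_left)

lemma cinner_diff_right: "cinner x (y - z) = cinner x y - cinner x z"
  using cinner_add_right[of x y "-z"] by (simp add: cinner_minus_right)

lemma cinner_sum_left: "cinner (sum f A) y = (\<Sum>i\<in>A. cinner (f i) y)"
  by (induction A rule: infinite_finite_induct) (auto simp: cinner_add_left)

lemma cinner_sum_right: "cinner x (sum f A) = (\<Sum>i\<in>A. cinner x (f i))"
  by (induction A rule: infinite_finite_induct) (auto simp: cinner_add_right)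

lemma cinner_self_eq_norm_sq: "cinner x x = complex_of_real ((norm x)\<^sup>2)"
proof -
  have "Im (cinner x x) = 0"
    using cinner_commute[of x x] by (metis cnj.simps(2) complex_cnj_cancel_iff neg_equal_zero)
  moreover have "Re (cinner x x) = (norm x)\<^sup>2"
    using norm_eq_sqrt_cinner[of x] cinner_ge_zero[of x] by simp
  ultimately show ?thesis by (simp add: complex_eq_iff)
qed

lemma power2_norm_eq_cinner: "(norm x)\<^sup>2 = Re (cinner x x)"
  by (simp add: cinner_self_eq_norm_sq)

lemma power2_norm_add: "(norm (x + y))\<^sup>2 = (norm x)\<^sup>2 + (norm y)\<^sup>2 + 2 * Re (cinner x y)"
proof -
  have "cinner (x + y) (x + y) = cinner x x + cinner y y + (cinner x y + cnj (cinner x y))"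
    by (simp add: cinner_add_left cinner_add_right cinner_commute[of y x] algebra_simps)
  then show ?thesis by (simp add: power2_norm_eq_cinner)
qed

lemma norm_parallelogram:
  "(norm (x + y))\<^sup>2 + (norm (x - y))\<^sup>2 = 2 * (norm x)\<^sup>2 + 2 * (norm y)\<^sup>2"
  using power2_norm_add[of x y] power2_norm_add[of x "-y"] by (simp add: cinner_minus_right)

lemma norm_scaleC: "norm (scaleC c x) = cmod c * norm x"
proof -
  have "(norm (scaleC c x))\<^sup>2 = Re (c * cnj c * cinner x x)"
    by (simp add: power2_norm_eq_cinner cinner_scaleC_left cinner_scaleC_right algebra_simps)
  also have "\<dots> = (cmod c * norm x)\<^sup>2"
    by (simp add: cinner_self_eq_norm_sq complex_mult_cnj power_mult_distrib cmod_power2)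
  finally show ?thesis by (rule power2_eq_imp_eq) auto
qed

lemma norm_eq_of_cinner_self:
  assumes "cinner x x = of_real (s * s)" "0 \<le> s"
  shows "norm x = s"
proof -
  have "(norm x)\<^sup>2 = Re (cinner x x)" by (rule power2_norm_eq_cinner)
  also have "\<dots> = s\<^sup>2" using assms(1) by (simp add: power2_eq_square)
  finally have "(norm x)\<^sup>2 = s\<^sup>2" .
  then show ?thesis using assms(2) by (simp add: power2_eq_iff_nonneg)
qed

lemma cinner_Cauchy_Schwarz: "cmod (cinner x y) \<le> norm x * norm y"
proof (cases "y = 0")
  case True then show ?thesis by simp
next
  case False
  define N where "N = (norm y)\<^sup>2"
  have N: "N > 0" using False by (simp add: N_def)
  define z where "z = cinner x y"
  define c where "c = z / of_real N"
  have "cinner (x - scaleC c y) (x - scaleC c y) =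
      cinner x x - cnj c * z - c * cnj z + c * cnj c * cinner y y"
    by (simp add: cinner_diff_left cinner_diff_right cinner_scaleC_left cinner_scaleC_right
        z_def cinner_commute[of y x] algebra_simps)
  also have "\<dots> = of_real ((norm x)\<^sup>2 - (cmod z)\<^sup>2 / N)"
  proof -
    have w: "cnj z * z = of_real ((cmod z)\<^sup>2)" by (metis complex_norm_square mult.commute)
    have e1: "cnj c * z = (cnj z * z) / of_real N" unfolding c_def by simp
    also have "\<dots> = of_real ((cmod z)\<^sup>2 / N)" by (simp only: w of_real_divide)
    finally have e1: "cnj c * z = of_real ((cmod z)\<^sup>2 / N)" .
    have e2: "c * cnj z = (cnj z * z) / of_real N" unfolding c_def by simp
    also have "\<dots> = of_real ((cmod z)\<^sup>2 / N)" by (simp only: w of_real_divide)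
    finally have e2: "c * cnj z = of_real ((cmod z)\<^sup>2 / N)" .
    have yy: "cinner y y = of_real N" by (simp add: cinner_self_eq_norm_sq N_def)
    have e3: "c * cnj c * cinner y y = (cnj z * z) / of_real N"
      unfolding c_def yy using N by (simp add: field_simps)
    also have "\<dots> = of_real ((cmod z)\<^sup>2 / N)" by (simp only: w of_real_divide)
    finally have e3: "c * cnj c * cinner y y = of_real ((cmod z)\<^sup>2 / N)" .
    show ?thesis using e1 e2 e3 by (simp add: cinner_self_eq_norm_sq)
  qed
  finally have "0 \<le> (norm x)\<^sup>2 - (cmod z)\<^sup>2 / N"
    using cinner_ge_zero[of "x - scaleC c y"] by simp
  then have "(cmod z)\<^sup>2 / N \<le> (norm x)\<^sup>2" by simp
  then have "(cmod z)\<^sup>2 \<le> (norm x)\<^sup>2 * N" using N by (simp add: pos_divide_le_eq)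
  then have "(cmod z)\<^sup>2 \<le> (norm x * norm y)\<^sup>2"
    by (simp only: N_def power_mult_distrib)
  then have "cmod z \<le> norm x * norm y" by (rule power2_le_imp_le) simp
  then show ?thesis unfolding z_def .
qed

lemma cinner_eqI: "(\<And>z. cinner z x = cinner z y) \<Longrightarrow> x = y"
proof -
  assume "\<And>z. cinner z x = cinner z y"
  then have "cinner (x - y) (x - y) = 0" by (simp add: cinner_diff_right)
  then show "x = y" by (simp add: cinner_eq_zero_iff)
qed

end

definition clinear :: "('a::complex_vector \<Rightarrow> 'b::complex_vector) \<Rightarrow> bool" where
  "clinear f \<longleftrightarrow> (\<forall>x y. f (x + y) = f x + f y) \<and> (\<forall>c x. f (scaleC c x) = scaleC c (f x))"

lemma clinearI:
  "(\<And>x y. f (x + y) = f x + f y) \<Longrightarrow> (\<And>c x. f (scaleC c x) = scaleC c (f x)) \<Longrightarrow> clinear f"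
  by (simp add: clinear_def)

lemma clinear_add: "clinear f \<Longrightarrow> f (x + y) = f x + f y"
  by (simp add: clinear_def)

lemma clinear_scaleC: "clinear f \<Longrightarrow> f (scaleC c x) = scaleC c (f x)"
  by (simp add: clinear_def)

lemma clinear_zero: "clinear f \<Longrightarrow> f 0 = 0"
  using clinear_scaleC[of f 0 0] by simp

lemma clinear_diff: "clinear f \<Longrightarrow> f (x - y) = f x - f y"
  using clinear_add[of f "x - y" y] by (simp add: eq_diff_eq)

lemma clinear_sum: "clinear f \<Longrightarrow> f (sum g A) = (\<Sum>i\<in>A. f (g i))"
  by (induction A rule: infinite_finite_induct) (auto simp: clinear_add clinear_zero)

lemma clinear_compose: "clinear f \<Longrightarrow> clinear g \<Longrightarrow> clinear (\<lambda>x. f (g x))"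
  by (simp add: clinear_def)

lemma clinear_bounded_linear:
  assumes "clinear f" and "\<And>x. norm (f x) \<le> K * norm x"
  shows "bounded_linear f"
proof (rule bounded_linear_intro[of _ K])
  show "f (x + y) = f x + f y" for x y by (rule clinear_add[OF assms(1)])
  show "f (scaleR r x) = scaleR r (f x)" for r x
    using clinear_scaleC[OF assms(1)] by (simp add: scaleR_scaleC)
  show "norm (f x) \<le> norm x * K" for x using assms(2)[of x] by (simp add: mult.commute)
qed

lemma bop_clinear: "bop f \<Longrightarrow> clinear f"
  unfolding bop_def by (simp add: clinearI linear_add bounded_linear.linear)

lemma bop_bound: "bop f \<Longrightarrow> norm (f x) \<le> onorm f * norm x"
  unfolding bop_def using onorm by blast

definition contraction :: "('a::complex_inner \<Rightarrow> 'b::complex_inner) \<Rightarrow> bool" where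
  "contraction f \<longleftrightarrow> clinear f \<and> (\<forall>x. norm (f x) \<le> norm x)"

lemma contractionI: "clinear f \<Longrightarrow> (\<And>x. norm (f x) \<le> norm x) \<Longrightarrow> contraction f"
  by (simp add: contraction_def)

lemma contraction_clinear: "contraction f \<Longrightarrow> clinear f"
  by (simp add: contraction_def)

lemma contraction_norm: "contraction f \<Longrightarrow> norm (f x) \<le> norm x"
  by (simp add: contraction_def)

lemma contraction_compose:
  assumes "contraction f" "contraction g"
  shows "contraction (\<lambda>x. f (g x))"
proof (rule contractionI)
  show "clinear (\<lambda>x. f (g x))"
    by (rule clinear_compose[OF contraction_clinear[OF assms(1)] contraction_clinear[OF assms(2)]])
  show "norm (f (g x)) \<le> norm x" for x
    using contraction_norm[OF assms(1), of "g x"] contraction_norm[OF assms(2), of x] by simp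
qed

lemma bop_onorm_le_1_iff: "bop f \<and> onorm f \<le> 1 \<longleftrightarrow> contraction f"
proof
  assume f: "bop f \<and> onorm f \<le> 1"
  have "norm (f x) \<le> norm x" for x
    using bop_bound[of f x] mult_right_mono[of "onorm f" 1 "norm x"] f by simp
  with f show "contraction f" by (simp add: contractionI bop_clinear)
next
  assume f: "contraction f"
  have "bounded_linear f"
    by (rule clinear_bounded_linear[of f 1]) (simp_all add: contraction_clinear[OF f] contraction_norm[OF f])
  moreover have "onorm f \<le> 1"
    by (rule onorm_bound) (simp_all add: contraction_norm[OF f])
  ultimately show "bop f \<and> onorm f \<le> 1"
    using f by (simp add: bop_def clinear_scaleC contraction_clinear)
qed

definition orthonormal_on :: "'i set \<Rightarrow> ('i \<Rightarrow> 'a::complex_inner) \<Rightarrow> bool" where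
  "orthonormal_on K w \<longleftrightarrow> (\<forall>k\<in>K. \<forall>m\<in>K. cinner (w k) (w m) = (if k = m then 1 else 0))"

lemma orthonormal_onD:
  "orthonormal_on K w \<Longrightarrow> k \<in> K \<Longrightarrow> m \<in> K \<Longrightarrow> cinner (w k) (w m) = (if k = m then 1 else 0)"
  by (simp add: orthonormal_on_def)

lemma orthonormal_on_subset: "orthonormal_on B w \<Longrightarrow> K \<subseteq> B \<Longrightarrow> orthonormal_on K w"
  unfolding orthonormal_on_def by blast

lemma orthonormal_on_insert:
  assumes "orthonormal_on B id" "\<And>u. u \<in> B \<Longrightarrow> cinner c u = 0" "cinner c c = 1"
  shows "orthonormal_on (insert c B) id"
proof -
  have "cinner u c = 0" if "u \<in> B" for u
    using assms(2)[OF that] cinner_commute[of u c] by simp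
  moreover have "c \<notin> B" using assms(2,3) by force
  ultimately show ?thesis using assms unfolding orthonormal_on_def by auto
qed

lemma cinner_sum_orthonormal:
  assumes "orthonormal_on K w" "finite K" "m \<in> K"
  shows "cinner (\<Sum>k\<in>K. scaleC (a k) (w k)) (w m) = a m"
proof -
  have "cinner (\<Sum>k\<in>K. scaleC (a k) (w k)) (w m) = (\<Sum>k\<in>K. if k = m then a k else 0)"
    using assms(1,3) unfolding orthonormal_on_def
    by (intro trans[OF cinner_sum_left] sum.cong) (auto simp: cinner_scaleC_left)
  also have "\<dots> = a m" using assms(2,3) by simp
  finally show ?thesis .
qed

lemma power2_norm_sum_orthonormal:
  assumes "orthonormal_on K w" "finite K"
  shows "(norm (\<Sum>k\<in>K. scaleC (a k) (w k)))\<^sup>2 = (\<Sum>k\<in>K. (cmod (a k))\<^sup>2)"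
proof -
  let ?S = "\<Sum>k\<in>K. scaleC (a k) (w k)"
  have "cinner ?S ?S = (\<Sum>m\<in>K. cnj (a m) * a m)"
    using cinner_sum_orthonormal[OF assms] by (simp add: cinner_sum_right cinner_scaleC_right)
  also have "\<dots> = (\<Sum>m\<in>K. of_real ((cmod (a m))\<^sup>2))"
    by (intro sum.cong refl) (metis complex_norm_square mult.commute)
  finally show ?thesis by (simp add: power2_norm_eq_cinner)
qed

lemma Bessel_inequality:
  assumes "orthonormal_on K w" "finite K"
  shows "(\<Sum>k\<in>K. (cmod (cinner h (w k)))\<^sup>2) \<le> (norm h)\<^sup>2"
proof -
  define p where "p = (\<Sum>k\<in>K. scaleC (cinner h (w k)) (w k))"
  define s where "s = (\<Sum>k\<in>K. (cmod (cinner h (w k)))\<^sup>2)"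
  have "(norm p)\<^sup>2 = s" unfolding p_def s_def by (rule power2_norm_sum_orthonormal[OF assms])
  moreover have "cinner h p = (\<Sum>k\<in>K. of_real ((cmod (cinner h (w k)))\<^sup>2))"
    unfolding p_def cinner_sum_right cinner_scaleC_right
    by (intro sum.cong refl) (metis complex_norm_square mult.commute)
  ultimately have "(norm (h - p))\<^sup>2 = (norm h)\<^sup>2 - s"
    using power2_norm_add[of h "-p"] by (simp add: cinner_minus_right s_def Re_sum)
  moreover have "0 \<le> (norm (h - p))\<^sup>2" by simp
  ultimately show ?thesis unfolding s_def by linarith
qed

section \<open>Riesz representation and adjoints\<close>

lemma power2_norm_diff_le_of_midpoint:
  fixes x y :: "'a::complex_inner"
  assumes "d \<le> norm (scaleR (1/2) (x + y))" "0 \<le> d"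
    and "norm x \<le> d + e" "norm y \<le> d + e'" "0 \<le> e" "e \<le> 1" "0 \<le> e'" "e' \<le> 1"
  shows "(norm (x - y))\<^sup>2 \<le> (4 * d + 2) * (e + e')"
proof -
  have "(2 * d)\<^sup>2 \<le> (norm (x + y))\<^sup>2"
    using assms(1,2) by (intro power_mono) auto
  moreover have "(norm x)\<^sup>2 \<le> (d + e)\<^sup>2" "(norm y)\<^sup>2 \<le> (d + e')\<^sup>2"
    using assms(3,4) by (auto intro: power_mono)
  ultimately have "(norm (x - y))\<^sup>2 \<le> 2 * (d + e)\<^sup>2 + 2 * (d + e')\<^sup>2 - (2 * d)\<^sup>2"
    using norm_parallelogram[of x y] by simp
  also have "\<dots> = (4 * d) * (e + e') + 2 * (e * e) + 2 * (e' * e')"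
    by (simp add: power2_eq_square algebra_simps)
  also have "\<dots> \<le> (4 * d) * (e + e') + 2 * e + 2 * e'"
    using mult_right_le_one_le[of e e] mult_right_le_one_le[of e' e'] assms(5-8) by linarith
  finally show ?thesis by (simp add: algebra_simps)
qed

lemma Cauchy_minimising_sequence:
  fixes h :: "nat \<Rightarrow> 'a::complex_inner"
  assumes mid: "\<And>x y. x \<in> S \<Longrightarrow> y \<in> S \<Longrightarrow> scaleR (1/2) (x + y) \<in> S"
    and low: "\<And>x. x \<in> S \<Longrightarrow> d \<le> norm x" and d0: "0 \<le> d"
    and hS: "\<And>n. h n \<in> S" and hd: "\<And>n. norm (h n) \<le> d + inverse (real (Suc n))"
  shows "Cauchy h"
proof (rule metric_CauchyI)
  define e where "e n = inverse (real (Suc n))" for n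
  have e: "0 \<le> e n" "e n \<le> 1" for n by (auto simp: e_def field_simps)
  have he: "norm (h n) \<le> d + e n" for n using hd by (simp add: e_def)
  fix eps :: real assume eps: "0 < eps"
  obtain N :: nat where N: "2 * (4 * d + 2) / eps\<^sup>2 < real N" using reals_Archimedean2 by blast
  have "dist (h m) (h n) < eps" if "m \<ge> N" "n \<ge> N" for m n
  proof -
    have eN: "e m \<le> e N" "e n \<le> e N"
      using that unfolding e_def by (auto intro!: le_imp_inverse_le)
    have "(norm (h m - h n))\<^sup>2 \<le> (4 * d + 2) * (e m + e n)"
      by (rule power2_norm_diff_le_of_midpoint[OF low[OF mid[OF hS hS]] d0
            he he e e])
    also have "\<dots> \<le> (4 * d + 2) * (2 * e N)"
      using eN d0 by (intro mult_left_mono) auto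
    also have "\<dots> < eps\<^sup>2"
    proof -
      have "2 * (4 * d + 2) < real N * eps\<^sup>2"
        using N eps by (simp add: divide_less_eq)
      also have "\<dots> \<le> eps\<^sup>2 * real (Suc N)" by (simp add: algebra_simps)
      finally show ?thesis by (simp add: e_def field_simps)
    qed
    finally show ?thesis
      using eps by (simp add: dist_norm power_less_imp_less_base)
  qed
  then show "\<exists>M. \<forall>m\<ge>M. \<forall>n\<ge>M. dist (h m) (h n) < eps" by blast
qed

lemma exists_min_norm:
  fixes S :: "'a::{complex_inner,complete_space} set"
  assumes "closed S" "S \<noteq> {}"
    and mid: "\<And>x y. x \<in> S \<Longrightarrow> y \<in> S \<Longrightarrow> scaleR (1/2) (x + y) \<in> S"
  shows "\<exists>z\<in>S. \<forall>x\<in>S. norm z \<le> norm x"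
proof -
  define d where "d = Inf (norm ` S)"
  have low: "d \<le> norm x" if "x \<in> S" for x
    unfolding d_def using that by (intro cInf_lower) (auto intro: bdd_belowI[of _ 0])
  have d0: "0 \<le> d"
    unfolding d_def using assms(2) by (intro cInf_greatest) auto
  have "\<exists>h\<in>S. norm h < d + inverse (real (Suc n))" for n
  proof -
    have "Inf (norm ` S) < d + inverse (real (Suc n))" unfolding d_def by simp
    then show ?thesis using cInf_lessD[of "norm ` S"] assms(2) by auto
  qed
  then obtain h where hS: "\<And>n. h n \<in> S" and hd: "\<And>n. norm (h n) < d + inverse (real (Suc n))"
    by metis
  have "Cauchy h" by (rule Cauchy_minimising_sequence[OF mid low d0 hS less_imp_le[OF hd]])
  then obtain z where hz: "h \<longlonglongrightarrow> z" using Cauchy_convergent convergent_def by blast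
  have "z \<in> S" using closed_sequentially[OF assms(1)] hS hz by blast
  moreover have "norm z \<le> d"
  proof (rule tendsto_le[OF _ _ tendsto_norm[OF hz]])
    show "(\<lambda>n. d + inverse (real (Suc n))) \<longlonglongrightarrow> d"
      using tendsto_add[OF tendsto_const LIMSEQ_inverse_real_of_nat] by simp
    show "\<forall>\<^sub>F n in sequentially. norm (h n) \<le> d + inverse (real (Suc n))"
      using hd by (intro always_eventually allI less_imp_le)
  qed simp
  ultimately show ?thesis using low by force
qed

lemma cinner_eq_0_if_min_norm:
  assumes "\<And>t. norm z \<le> norm (z + scaleC t w)"
  shows "cinner z w = 0"
proof (cases "w = 0")
  case False
  define c where "c = cinner z w"
  define N where "N = (norm w)\<^sup>2"
  have N: "N > 0" using False by (simp add: N_def)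
  define t where "t = - (c / of_real N)"
  have "cnj t * c = - (cnj c * c) / of_real N" by (simp add: t_def)
  also have "cnj c * c = of_real ((cmod c)\<^sup>2)" by (metis complex_norm_square mult.commute)
  finally have ct: "cnj t * c = - of_real ((cmod c)\<^sup>2 / N)" by simp
  have ctm: "cmod t = cmod c / N" using N by (simp add: t_def norm_divide)
  have "(cmod t * norm w)\<^sup>2 = (cmod t)\<^sup>2 * N" by (simp add: power_mult_distrib N_def)
  also have "\<dots> = (cmod c)\<^sup>2 / N" using N by (simp add: ctm power2_eq_square field_simps)
  finally have "(norm (z + scaleC t w))\<^sup>2 = (norm z)\<^sup>2 - (cmod c)\<^sup>2 / N"
    by (simp add: power2_norm_add norm_scaleC cinner_scaleC_right c_def[symmetric] ct)
  moreover have "(norm z)\<^sup>2 \<le> (norm (z + scaleC t w))\<^sup>2"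
    using assms by (intro power_mono) auto
  ultimately have "(cmod c)\<^sup>2 / N \<le> 0" by simp
  then show ?thesis using N by (simp add: c_def divide_le_0_iff)
qed simp

text \<open>The point of minimal norm on the hyperplane \<open>f x = 1\<close> is orthogonal to the kernel of
  \<open>f\<close>, so a multiple of it represents \<open>f\<close>.\<close>

lemma Riesz_representation:
  fixes f :: "'a::{complex_inner,complete_space} \<Rightarrow> complex"
  assumes f: "clinear f" and bound: "\<And>x. cmod (f x) \<le> K * norm x"
  shows "\<exists>v. \<forall>x. f x = cinner x v"
proof (cases "\<forall>x. f x = 0")
  case True
  then show ?thesis by (intro exI[of _ 0]) simp
next
  case False
  then obtain x0 where x0: "f x0 \<noteq> 0" by blast
  have "bounded_linear f" using f bound by (rule clinear_bounded_linear)
  then have "closed (f -` {1})"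
    by (intro closed_vimage closed_singleton linear_continuous_on bounded_linear.linear) auto
  moreover have "scaleC (1 / f x0) x0 \<in> f -` {1}"
    using x0 by (simp add: clinear_scaleC[OF f] scaleC_complex_def)
  moreover have "scaleR (1/2) (x + y) \<in> f -` {1}" if "x \<in> f -` {1}" "y \<in> f -` {1}" for x y
    using that by (simp add: scaleR_scaleC clinear_scaleC[OF f] clinear_add[OF f] scaleC_complex_def)
  ultimately obtain z where fz: "f z = 1" and zmin: "\<And>x. f x = 1 \<Longrightarrow> norm z \<le> norm x"
    using exists_min_norm[of "f -` {1}"] by blast
  have z0: "z \<noteq> 0" using fz clinear_zero[OF f] by auto
  have "f x = cinner x (scaleC (of_real (inverse ((norm z)\<^sup>2))) z)" for x
  proof -
    let ?w = "x - scaleC (f x) z"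
    have "f ?w = 0"
      using fz by (simp add: clinear_diff[OF f] clinear_scaleC[OF f] scaleC_complex_def)
    then have "norm z \<le> norm (z + scaleC t ?w)" for t
      using fz by (intro zmin) (simp add: clinear_add[OF f] clinear_scaleC[OF f] scaleC_complex_def)
    then have "cinner z ?w = 0" by (rule cinner_eq_0_if_min_norm)
    then have "cinner ?w z = 0" using cinner_commute[of ?w z] by simp
    then have "cinner x z = f x * of_real ((norm z)\<^sup>2)"
      by (simp add: cinner_diff_left cinner_scaleC_left cinner_self_eq_norm_sq)
    then show ?thesis using z0 by (simp add: cinner_scaleC_right)
  qed
  then show ?thesis by blast
qed

lemma bop_adjoint_exists:
  fixes a :: "'h::{complex_inner,complete_space} \<Rightarrow> 'h"
  assumes "bop a"
  shows "\<exists>g. \<forall>x y. cinner (a x) y = cinner x (g y)"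
proof -
  have "\<exists>v. \<forall>x. cinner (a x) y = cinner x v" for y
  proof (rule Riesz_representation[where K = "onorm a * norm y"])
    show "clinear (\<lambda>x. cinner (a x) y)"
      using bop_clinear[OF assms]
      by (intro clinearI) (simp_all add: clinear_add clinear_scaleC cinner_add_left
          cinner_scaleC_left scaleC_complex_def)
    show "cmod (cinner (a x) y) \<le> onorm a * norm y * norm x" for x
    proof -
      have "cmod (cinner (a x) y) \<le> norm (a x) * norm y" by (rule cinner_Cauchy_Schwarz)
      also have "\<dots> \<le> onorm a * norm x * norm y"
        using bop_bound[OF assms] by (intro mult_right_mono) auto
      finally show ?thesis by (simp add: algebra_simps)
    qed
  qed
  then show ?thesis by metis
qed

lemma cinner_adj:
  fixes a :: "'h::{complex_inner,complete_space} \<Rightarrow> 'h"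
  assumes "bop a"
  shows "cinner (a x) y = cinner x (adj a y)"
proof -
  obtain g where g: "\<forall>x y. cinner (a x) y = cinner x (g y)" using bop_adjoint_exists[OF assms] by blast
  have "\<exists>!g. \<forall>x y. cinner (a x) y = cinner x (g y)"
  proof (rule ex1I[of _ g])
    fix g' assume g': "\<forall>x y. cinner (a x) y = cinner x (g' y)"
    show "g' = g"
    proof (rule ext, rule cinner_eqI)
      show "cinner z (g' y) = cinner z (g y)" for y z using g g' by metis
    qed
  qed (rule g)
  then have "\<forall>x y. cinner (a x) y = cinner x (adj a y)" unfolding adj_def by (rule theI')
  then show ?thesis by blast
qed

instantiation vec :: (complex_vector, finite) complex_vector
begin
definition scaleC_vec_def: "scaleC c x = (\<chi> i. scaleC c (x $ i))"
instance
  by standard (simp_all add: scaleC_vec_def vec_eq_iff scaleC_add_right scaleC_add_left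
      scaleC_scaleC scaleC_one scaleR_scaleC)
end

lemma scaleC_vec_nth [simp]: "(scaleC c x) $ i = scaleC c (x $ i)"
  by (simp add: scaleC_vec_def)

instantiation vec :: (complex_inner, finite) complex_inner
begin
definition cinner_vec_def: "cinner x y = (\<Sum>i\<in>UNIV. cinner (x $ i) (y $ i))"
instance
proof
  fix c :: complex and x y z :: "'a ^ 'b"
  show "cinner (x + y) z = cinner x z + cinner y z"
    by (simp add: cinner_vec_def cinner_add_left sum.distrib)
  show "cinner (scaleC c x) y = c * cinner x y"
    by (simp add: cinner_vec_def cinner_scaleC_left sum_distrib_left)
  show "cinner y x = cnj (cinner x y)"
    by (simp add: cinner_vec_def cnj_sum cinner_commute[of "y $ i" "x $ i" for i])
  have xx: "cinner x x = complex_of_real (\<Sum>i\<in>UNIV. (norm (x $ i))\<^sup>2)"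
    by (simp add: cinner_vec_def cinner_self_eq_norm_sq)
  show "0 \<le> Re (cinner x x)" unfolding xx by (simp add: sum_nonneg)
  show "cinner x x = 0 \<longleftrightarrow> x = 0"
    unfolding xx of_real_eq_0_iff by (simp add: sum_nonneg_eq_0_iff vec_eq_iff)
  show "norm x = sqrt (Re (cinner x x))"
    unfolding xx by (simp add: norm_vec_def L2_set_def)
qed
end

lemma cinner_cvec: "cinner (x :: complex ^ 'n) y = (\<Sum>i\<in>UNIV. x $ i * cnj (y $ i))"
  by (simp add: cinner_vec_def cinner_complex_def)

lemma scaleC_cvec_nth [simp]: "(scaleC c (x :: complex ^ 'n)) $ i = c * x $ i"
  by (simp add: scaleC_complex_def)

lemma inner_cvec: "inner (x :: complex ^ 'n) y = Re (cinner x y)"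
  by (simp add: inner_vec_def cinner_cvec inner_complex_def Re_sum)

lemma cinner_axis_right: "cinner (u :: complex ^ 'n) (axis j 1) = u $ j"
proof -
  have "cinner u (axis j 1) = (\<Sum>k\<in>UNIV. if k = j then u $ j else 0)"
    unfolding cinner_cvec by (intro sum.cong refl) (auto simp: axis_def)
  then show ?thesis by simp
qed

lemma cvec_axis_expansion: "(\<Sum>j\<in>UNIV. scaleC (cinner y (axis j 1)) (axis j 1)) = (y :: complex ^ 'n)"
proof -
  have "(\<Sum>j\<in>UNIV. y $ j * axis j 1 $ i) = y $ i" for i :: 'n
  proof -
    have "(\<Sum>j\<in>UNIV. y $ j * axis j 1 $ i) = (\<Sum>j\<in>UNIV. if j = i then y $ i else 0)"
      by (intro sum.cong refl) (auto simp: axis_def)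
    then show ?thesis by simp
  qed
  then show ?thesis by (simp add: vec_eq_iff cinner_axis_right sum_component scaleC_complex_def)
qed

lemma clinear_matrix_vector_mult: "clinear (\<lambda>x. (A :: complex ^ 'n ^ 'm) *v x)"
  by (rule clinearI)
    (simp add: matrix_vector_right_distrib,
     simp add: matrix_vector_mult_def vec_eq_iff sum_distrib_left algebra_simps scaleC_complex_def)

lemma cinner_matrix_vector_mult_adjoint:
  fixes A :: "complex ^ 'n ^ 'n"
  shows "cinner (A *v x) y = cinner x (mat_adjoint A *v y)"
proof -
  have "cinner (A *v x) y = (\<Sum>i\<in>UNIV. \<Sum>j\<in>UNIV. A $ i $ j * x $ j * cnj (y $ i))"
    by (simp add: cinner_cvec matrix_vector_mult_def sum_distrib_right)
  also have "\<dots> = (\<Sum>j\<in>UNIV. \<Sum>i\<in>UNIV. A $ i $ j * x $ j * cnj (y $ i))"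
    by (rule sum.swap)
  also have "\<dots> = cinner x (mat_adjoint A *v y)"
    by (simp add: cinner_cvec matrix_vector_mult_def mat_adjoint_def cnj_sum sum_distrib_left
        algebra_simps)
  finally show ?thesis .
qed

lemma cinner_hermitian:
  fixes A :: "complex ^ 'n ^ 'n"
  assumes "mat_adjoint A = A"
  shows "cinner (A *v x) y = cinner x (A *v y)"
  using cinner_matrix_vector_mult_adjoint[of A x y] assms by simp

lemma hermitianI:
  fixes A :: "complex ^ 'n ^ 'n"
  assumes "\<And>x y. cinner (A *v x) y = cinner x (A *v y)"
  shows "mat_adjoint A = A"
proof -
  have "mat_adjoint A *v y = A *v y" for y
    by (rule cinner_eqI) (simp add: assms cinner_matrix_vector_mult_adjoint[symmetric])
  then show ?thesis by (simp add: matrix_eq)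
qed

lemma cinner_hermitian_self_real:
  fixes A :: "complex ^ 'n ^ 'n"
  assumes "mat_adjoint A = A"
  shows "cinner (A *v x) x = of_real (Re (cinner (A *v x) x))"
proof -
  have "cinner (A *v x) x = cnj (cinner (A *v x) x)"
    using cinner_hermitian[OF assms, of x x] cinner_commute[of x "A *v x"] by simp
  then have "Im (cinner (A *v x) x) = 0"
    by (metis cnj.simps(2) complex_cnj_cancel_iff neg_equal_zero)
  then show ?thesis by (simp add: complex_eq_iff)
qed

lemma psd_mat_iff:
  fixes X :: "complex ^ 'n ^ 'n"
  shows "psd_mat X \<longleftrightarrow> mat_adjoint X = X \<and> (\<forall>v. 0 \<le> Re (cinner (X *v v) v))"
proof -
  have "(\<Sum>i\<in>UNIV. \<Sum>j\<in>UNIV. cnj (v $ i) * X $ i $ j * v $ j) = cinner (X *v v) v" for v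
    by (simp add: cinner_cvec matrix_vector_mult_def sum_distrib_right sum_distrib_left
        algebra_simps)
  then show ?thesis unfolding psd_mat_def by simp
qed

lemma psd_mat_hermitian: "psd_mat X \<Longrightarrow> mat_adjoint X = X"
  by (simp add: psd_mat_iff)

lemma psd_mat_nonneg: "psd_mat X \<Longrightarrow> 0 \<le> Re (cinner (X *v v) v)"
  by (simp add: psd_mat_iff)

definition onb :: "'a::complex_inner set \<Rightarrow> bool" where
  "onb B \<longleftrightarrow> finite B \<and> orthonormal_on B id \<and> (\<forall>x. x = (\<Sum>u\<in>B. scaleC (cinner x u) u))"

lemma onb_finite: "onb B \<Longrightarrow> finite B"
  by (simp add: onb_def)

lemma onb_orthonormal: "onb B \<Longrightarrow> orthonormal_on B id"
  by (simp add: onb_def)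

lemma onb_expansion: "onb B \<Longrightarrow> x = (\<Sum>u\<in>B. scaleC (cinner x u) u)"
  unfolding onb_def by blast

lemma cinner_onb: "onb B \<Longrightarrow> u \<in> B \<Longrightarrow> v \<in> B \<Longrightarrow> cinner u v = (if u = v then 1 else 0)"
  by (simp add: onb_def orthonormal_on_def)

lemma clinear_onb_expansion:
  assumes "clinear f" "onb B"
  shows "f x = (\<Sum>u\<in>B. scaleC (cinner x u) (f u))"
proof -
  have "f x = f (\<Sum>u\<in>B. scaleC (cinner x u) u)" using onb_expansion[OF assms(2)] by metis
  then show ?thesis by (simp add: clinear_sum[OF assms(1)] clinear_scaleC[OF assms(1)])
qed

lemma clinear_eq_on_onb:
  assumes "clinear f" "clinear g" "onb B" "\<And>u. u \<in> B \<Longrightarrow> f u = g u"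
  shows "f x = g x"
proof -
  have "f x = (\<Sum>u\<in>B. scaleC (cinner x u) (f u))" by (rule clinear_onb_expansion[OF assms(1,3)])
  also have "\<dots> = (\<Sum>u\<in>B. scaleC (cinner x u) (g u))" using assms(4) by simp
  also have "\<dots> = g x" by (rule clinear_onb_expansion[OF assms(2,3), symmetric])
  finally show ?thesis .
qed

lemma matrix_eq_on_onb:
  fixes X Y :: "complex ^ 'n ^ 'n"
  assumes "onb B" "\<And>u. u \<in> B \<Longrightarrow> X *v u = Y *v u"
  shows "X = Y"
  using clinear_eq_on_onb[OF clinear_matrix_vector_mult clinear_matrix_vector_mult assms]
  by (simp add: matrix_eq)

section \<open>Spectral theorem for Hermitian matrices\<close>

text \<open>An orthonormal family in \<open>\<complex>\<^sup>n\<close> together with its \<open>\<i>\<close>-multiples is a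
  real orthogonal family in \<open>\<real>\<^sup>2\<^sup>n\<close>.\<close>

lemma card_orthonormal_le:
  fixes B :: "(complex ^ 'n) set"
  assumes fin: "finite B" and on: "orthonormal_on B id"
  shows "card B \<le> CARD('n)"
proof -
  define S where "S = B \<union> (\<lambda>u. scaleC \<i> u) ` B"
  have cu: "cinner u v = (if u = v then 1 else 0)" if "u \<in> B" "v \<in> B" for u v
    using orthonormal_onD[OF on that] by simp
  have "pairwise orthogonal S"
    unfolding pairwise_def orthogonal_def S_def inner_cvec
    by (auto simp: cu cinner_scaleC_left cinner_scaleC_right)
  moreover have "0 \<notin> S"
  proof
    assume "0 \<in> S"
    then obtain u where u: "u \<in> B" "u = 0 \<or> scaleC \<i> u = 0" unfolding S_def by auto
    have "scaleC (- \<i>) (scaleC \<i> u) = u" by (simp add: scaleC_scaleC scaleC_one)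
    then have "u = 0" using u(2) by auto
    then show False using cu[OF u(1) u(1)] by simp
  qed
  ultimately have "card S \<le> DIM(complex ^ 'n)"
    using pairwise_orthogonal_independent independent_bound by blast
  moreover have "B \<inter> (\<lambda>u. scaleC \<i> u) ` B = {}"
  proof (rule ccontr)
    assume "B \<inter> (\<lambda>u. scaleC \<i> u) ` B \<noteq> {}"
    then obtain v where v: "v \<in> B" "scaleC \<i> v \<in> B" by auto
    have "cinner (scaleC \<i> v) v = \<i>" using cu[OF v(1) v(1)] by (simp add: cinner_scaleC_left)
    then show False using cu[OF v(2) v(1)] by (auto split: if_splits)
  qed
  moreover have "inj_on (\<lambda>u. scaleC \<i> u) B"
  proof (rule inj_onI)
    fix x y assume "scaleC \<i> x = scaleC \<i> (y :: complex ^ 'n)"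
    then have "scaleC (- \<i>) (scaleC \<i> x) = scaleC (- \<i>) (scaleC \<i> y)" by simp
    then show "x = y" by (simp add: scaleC_scaleC scaleC_one)
  qed
  ultimately show ?thesis
    using fin by (simp add: S_def card_Un_disjoint card_image)
qed

lemma exists_unit_orthogonal:
  fixes B :: "(complex ^ 'n) set"
  assumes fin: "finite B" and lt: "card B < CARD('n)"
  shows "\<exists>c. norm c = 1 \<and> (\<forall>u\<in>B. cinner c u = 0)"
proof -
  define S where "S = B \<union> (\<lambda>u. scaleC \<i> u) ` B"
  have finS: "finite S" using fin by (simp add: S_def)
  have "card S \<le> card B + card ((\<lambda>u. scaleC \<i> u) ` B)" unfolding S_def by (rule card_Un_le)
  also have "\<dots> \<le> 2 * card B" using card_image_le[OF fin, of "\<lambda>u. scaleC \<i> u"] by simp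
  finally have "card S \<le> 2 * card B" .
  moreover have "dim S \<le> card S" by (rule dim_le_card[OF span_superset finS])
  ultimately have "dim S < DIM(complex ^ 'n)" using lt by simp
  then obtain x where x: "x \<noteq> 0" "\<And>y. y \<in> span S \<Longrightarrow> orthogonal x y"
    using orthogonal_to_subspace_exists by blast
  have "cinner x u = 0" if "u \<in> B" for u
  proof -
    have "orthogonal x u" "orthogonal x (scaleC \<i> u)"
      using x(2) that by (auto simp: S_def intro: span_base)
    then have "Re (cinner x u) = 0" "Re (cnj \<i> * cinner x u) = 0"
      by (auto simp: orthogonal_def inner_cvec cinner_scaleC_right)
    then show ?thesis by (simp add: complex_eq_iff)
  qed
  then show ?thesis using x(1)
    by (intro exI[of _ "scaleC (of_real (1 / norm x)) x"])
       (auto simp: norm_scaleC cinner_scaleC_left norm_divide)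
qed

lemma nonpos_if_linear_le_quadratic:
  fixes R D :: real
  assumes "\<And>t. 0 < t \<Longrightarrow> 2 * t * R \<le> t\<^sup>2 * D"
  shows "R \<le> 0"
proof (rule ccontr)
  assume R: "\<not> R \<le> 0"
  define t where "t = R / (\<bar>D\<bar> + 1)"
  have t: "0 < t" "t * (\<bar>D\<bar> + 1) = R" using R by (simp_all add: t_def add_pos_nonneg)
  have "2 * R \<le> t * D" using assms[OF t(1)] t(1) by (simp add: power2_eq_square algebra_simps)
  also have "\<dots> \<le> t * \<bar>D\<bar>" using t(1) by (intro mult_left_mono) auto
  also have "\<dots> < R" using t by (simp add: algebra_simps)
  finally show False using R by simp
qed

lemma quadratic_form_le_of_max_on_sphere:
  fixes A :: "complex ^ 'n ^ 'n"
  assumes scale: "\<And>a x. x \<in> W \<Longrightarrow> scaleC a x \<in> W"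
    and max: "\<And>y. y \<in> W \<Longrightarrow> norm y = 1 \<Longrightarrow> Re (cinner (A *v y) y) \<le> M"
    and "y \<in> W"
  shows "Re (cinner (A *v y) y) \<le> M * (norm y)\<^sup>2"
proof (cases "y = 0")
  case False
  define y' where "y' = scaleC (of_real (1 / norm y)) y"
  have "Re (cinner (A *v y') y') \<le> M"
    using False \<open>y \<in> W\<close> scale by (simp add: max y'_def norm_scaleC norm_divide)
  moreover have "Re (cinner (A *v y') y') = Re (cinner (A *v y) y) / (norm y)\<^sup>2"
    by (simp add: y'_def clinear_scaleC[OF clinear_matrix_vector_mult] cinner_scaleC_left
        cinner_scaleC_right power2_eq_square)
  ultimately show ?thesis using False by (simp add: divide_le_eq mult.commute)
qed simp

lemma Re_quadratic_form_add:
  fixes A :: "complex ^ 'n ^ 'n" and t :: real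
  assumes "mat_adjoint A = A"
  shows "Re (cinner (A *v (c + scaleC (of_real t) r)) (c + scaleC (of_real t) r)) =
    Re (cinner (A *v c) c) + 2 * t * Re (cinner (A *v c) r) + t\<^sup>2 * Re (cinner (A *v r) r)"
proof -
  have "cinner (A *v r) c = cnj (cinner (A *v c) r)"
    using cinner_hermitian[OF assms, of r c] cinner_commute[of r "A *v c"] by simp
  then show ?thesis
    by (simp add: matrix_vector_right_distrib clinear_scaleC[OF clinear_matrix_vector_mult]
        cinner_add_left cinner_add_right cinner_scaleC_left cinner_scaleC_right power2_eq_square
        algebra_simps)
qed

text \<open>A maximiser of the Rayleigh quotient on an \<open>A\<close>-invariant subspace is an eigenvector:
  moving from \<open>c\<close> in the direction of \<open>r = A c - \<lambda> c \<perp> c\<close> would increase the quotient to first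
  order.\<close>

lemma eigenvector_of_max_quadratic_form:
  fixes A :: "complex ^ 'n ^ 'n"
  assumes herm: "mat_adjoint A = A"
    and add: "\<And>x y. x \<in> W \<Longrightarrow> y \<in> W \<Longrightarrow> x + y \<in> W"
    and scale: "\<And>a x. x \<in> W \<Longrightarrow> scaleC a x \<in> W"
    and invariant: "\<And>x. x \<in> W \<Longrightarrow> A *v x \<in> W"
    and c: "c \<in> W" "norm c = 1"
    and max: "\<And>y. y \<in> W \<Longrightarrow> norm y = 1 \<Longrightarrow> Re (cinner (A *v y) y) \<le> Re (cinner (A *v c) c)"
  shows "A *v c = scaleC (of_real (Re (cinner (A *v c) c))) c"
proof -
  define q where "q y = Re (cinner (A *v y) y)" for y
  define lm where "lm = q c"
  define r where "r = A *v c + scaleC (- of_real lm) c"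
  define R where "R = (norm r)\<^sup>2"
  have cc: "cinner c c = 1" using c(2) by (simp add: cinner_self_eq_norm_sq)
  have Acc: "cinner (A *v c) c = of_real lm"
    unfolding lm_def q_def by (rule cinner_hermitian_self_real[OF herm])
  have Ac: "A *v c = r + scaleC (of_real lm) c" by (simp add: r_def scaleC_minus_left)
  have cr: "cinner c r = 0"
    using cinner_commute[of c r] by (simp add: r_def cinner_add_left cinner_scaleC_left Acc cc)
  have Acr: "cinner (A *v c) r = of_real R"
    by (simp add: Ac cinner_add_left cinner_scaleC_left cr R_def cinner_self_eq_norm_sq)
  have le: "q y \<le> lm * (norm y)\<^sup>2" if "y \<in> W" for y
    unfolding q_def lm_def by (rule quadratic_form_le_of_max_on_sphere[OF scale max that])
  have "2 * t * R \<le> t\<^sup>2 * (lm * R - q r)" if "0 < t" for t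
  proof -
    define y where "y = c + scaleC (of_real t) r"
    have "r \<in> W" using c by (simp add: r_def add scale invariant)
    then have "y \<in> W" using c by (simp add: y_def add scale)
    moreover have "(norm y)\<^sup>2 = 1 + t\<^sup>2 * R"
      using c(2) by (simp add: y_def power2_norm_add norm_scaleC cinner_scaleC_right cr R_def
          power_mult_distrib)
    moreover have "q y = lm + 2 * t * R + t\<^sup>2 * q r"
      using Re_quadratic_form_add[OF herm, of c t r] by (simp add: q_def y_def lm_def Acr)
    ultimately show ?thesis using le[of y] by (simp add: algebra_simps)
  qed
  then have "R \<le> 0" by (rule nonpos_if_linear_le_quadratic)
  then have "r = 0" by (simp add: R_def)
  then show ?thesis using Ac by (simp add: lm_def q_def)
qed

lemma exists_max_quadratic_form_orthogonal:
  fixes A :: "complex ^ 'n ^ 'n" and B :: "(complex ^ 'n) set"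
  assumes "finite B" "card B < CARD('n)"
  obtains c where "norm c = 1" "\<And>u. u \<in> B \<Longrightarrow> cinner c u = 0"
    "\<And>y. norm y = 1 \<Longrightarrow> (\<And>u. u \<in> B \<Longrightarrow> cinner y u = 0) \<Longrightarrow>
      Re (cinner (A *v y) y) \<le> Re (cinner (A *v c) c)"
proof -
  define K where "K = {c. norm c = 1} \<inter> (\<Inter>u\<in>B. {c. cinner c u = 0})"
  define q where "q c = Re (cinner (A *v c) c)" for c :: "complex ^ 'n"
  have cont_left: "continuous_on S (\<lambda>c::complex^'n. cinner c u)" for S u
    unfolding cinner_cvec by (intro continuous_intros continuous_on_component continuous_on_id)
  have "q = (\<lambda>c. Re (\<Sum>i\<in>UNIV. (\<Sum>j\<in>UNIV. A $ i $ j * c $ j) * cnj (c $ i)))"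
    by (simp add: fun_eq_iff q_def cinner_cvec matrix_vector_mult_def)
  then have cont: "continuous_on K q"
    by (simp only:) (intro continuous_intros continuous_on_component continuous_on_id)
  have "closed K"
    unfolding K_def by (intro closed_Int closed_INT ballI closed_Collect_eq continuous_intros cont_left)
  moreover have "bounded K" by (rule bounded_subset[of "cball 0 1"]) (auto simp: K_def)
  ultimately have "compact K" by (simp add: compact_eq_bounded_closed)
  moreover have "K \<noteq> {}" using exists_unit_orthogonal[OF assms] by (auto simp: K_def)
  ultimately obtain c where "c \<in> K" and "\<And>y. y \<in> K \<Longrightarrow> q y \<le> q c"
    using continuous_attains_sup[OF _ _ cont] by blast
  then show ?thesis using that[of c] by (simp add: K_def q_def)
qed

lemma exists_orthogonal_eigenvector:
  fixes A :: "complex ^ 'n ^ 'n"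
  assumes herm: "mat_adjoint A = A"
    and fin: "finite B" and on: "orthonormal_on B id" and lt: "card B < CARD('n)"
    and eig: "\<And>u. u \<in> B \<Longrightarrow> \<exists>\<mu>. A *v u = scaleC \<mu> u"
  shows "\<exists>c \<mu>. c \<notin> B \<and> orthonormal_on (insert c B) id \<and> A *v c = scaleC (of_real \<mu>) c"
proof -
  define W where "W = {c. \<forall>u\<in>B. cinner c u = 0}"
  obtain c where nc: "norm c = 1" and cu: "\<And>u. u \<in> B \<Longrightarrow> cinner c u = 0"
    and cmax: "\<And>y. norm y = 1 \<Longrightarrow> (\<And>u. u \<in> B \<Longrightarrow> cinner y u = 0) \<Longrightarrow>
      Re (cinner (A *v y) y) \<le> Re (cinner (A *v c) c)"
    using exists_max_quadratic_form_orthogonal[OF fin lt, of A] by blast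
  have "A *v c = scaleC (of_real (Re (cinner (A *v c) c))) c"
  proof (rule eigenvector_of_max_quadratic_form[OF herm, of W])
    show "x + y \<in> W" if "x \<in> W" "y \<in> W" for x y
      using that by (simp add: W_def cinner_add_left)
    show "scaleC a x \<in> W" if "x \<in> W" for a x
      using that by (simp add: W_def cinner_scaleC_left)
    show "A *v x \<in> W" if "x \<in> W" for x
    proof -
      have "cinner (A *v x) u = 0" if "u \<in> B" for u
        using eig[OF that] \<open>x \<in> W\<close> that
        by (auto simp: cinner_hermitian[OF herm] cinner_scaleC_right W_def)
      then show ?thesis by (simp add: W_def)
    qed
    show "c \<in> W" using cu by (simp add: W_def)
    show "norm c = 1" by (rule nc)
    show "Re (cinner (A *v y) y) \<le> Re (cinner (A *v c) c)" if "y \<in> W" "norm y = 1" for y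
      by (rule cmax) (use that in \<open>simp_all add: W_def\<close>)
  qed
  moreover have cc: "cinner c c = 1" using nc by (simp add: cinner_self_eq_norm_sq)
  moreover have "c \<notin> B" using cu cc by force
  ultimately show ?thesis using orthonormal_on_insert[OF on cu cc] by blast
qed

lemma hermitian_orthonormal_eigenvectors:
  fixes A :: "complex ^ 'n ^ 'n"
  assumes herm: "mat_adjoint A = A"
  shows "k \<le> CARD('n) \<Longrightarrow> \<exists>B lam. finite B \<and> card B = k \<and> orthonormal_on B id \<and>
      (\<forall>u\<in>B. A *v u = scaleC (of_real (lam u)) u)"
proof (induction k)
  case 0
  show ?case by (intro exI[of _ "{}"]) (auto simp: orthonormal_on_def)
next
  case (Suc k)
  then have "k \<le> CARD('n)" by simp
  then obtain B lam where B: "finite B" "card B = k" "orthonormal_on B id"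
      "\<forall>u\<in>B. A *v u = scaleC (of_real (lam u)) u" using Suc.IH by blast
  have "card B < CARD('n)" using B(2) Suc.prems by simp
  moreover have "\<exists>\<mu>. A *v u = scaleC \<mu> u" if "u \<in> B" for u using B(4) that by blast
  ultimately obtain c \<mu> where c: "c \<notin> B" "orthonormal_on (insert c B) id" "A *v c = scaleC (of_real \<mu>) c"
    using exists_orthogonal_eigenvector[OF herm B(1,3)] by blast
  have "\<forall>u\<in>insert c B. A *v u = scaleC (of_real ((lam(c := \<mu>)) u)) u"
    using B c by auto
  then show ?case
    using B c by (intro exI[of _ "insert c B"] exI[of _ "lam(c := \<mu>)"]) (simp add: id_def)
qed

lemma onb_if_card_eq:
  fixes B :: "(complex ^ 'n) set"
  assumes fin: "finite B" and on: "orthonormal_on B id" and card: "card B = CARD('n)"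
  shows "onb B"
proof -
  have "x = (\<Sum>u\<in>B. scaleC (cinner x u) u)" for x
  proof (rule ccontr)
    define r where "r = x - (\<Sum>u\<in>B. scaleC (cinner x u) u)"
    assume "x \<noteq> (\<Sum>u\<in>B. scaleC (cinner x u) u)"
    then have r0: "r \<noteq> 0" by (simp add: r_def)
    define c where "c = scaleC (of_real (1 / norm r)) r"
    have "norm c = 1" using r0 by (simp add: c_def norm_scaleC norm_divide)
    then have cc: "cinner c c = 1" by (simp add: cinner_self_eq_norm_sq)
    have cu: "cinner c u = 0" if "u \<in> B" for u
      using cinner_sum_orthonormal[OF on fin that, of "\<lambda>u. cinner x u"]
      by (simp add: c_def r_def cinner_scaleC_left cinner_diff_left)
    have "c \<notin> B" using cu cc by force
    moreover have "card (insert c B) \<le> CARD('n)"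
      using fin by (intro card_orthonormal_le orthonormal_on_insert[OF on cu cc]) auto
    ultimately show False using fin card by simp
  qed
  then show ?thesis using fin on by (simp add: onb_def)
qed

theorem hermitian_spectral_theorem:
  fixes A :: "complex ^ 'n ^ 'n"
  assumes "mat_adjoint A = A"
  obtains B lam where "onb B" "\<And>u. u \<in> B \<Longrightarrow> A *v u = scaleC (of_real (lam u)) u"
proof -
  obtain B lam where "finite B" "card B = CARD('n)" "orthonormal_on B id"
    "\<forall>u\<in>B. A *v u = scaleC (of_real (lam u)) u"
    using hermitian_orthonormal_eigenvectors[OF assms order_refl] by blast
  then show ?thesis using that onb_if_card_eq by blast
qed

definition diag_onb :: "(complex ^ 'n) set \<Rightarrow> (complex ^ 'n \<Rightarrow> complex) \<Rightarrow> complex ^ 'n ^ 'n" where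
  "diag_onb B f = (\<chi> i j. \<Sum>u\<in>B. f u * u $ i * cnj (u $ j))"

lemma diag_onb_mult_vector: "diag_onb B f *v x = (\<Sum>u\<in>B. scaleC (f u * cinner x u) u)"
proof -
  have "(diag_onb B f *v x) $ i = (\<Sum>u\<in>B. scaleC (f u * cinner x u) u) $ i" for i
  proof -
    have "(diag_onb B f *v x) $ i = (\<Sum>j\<in>UNIV. \<Sum>u\<in>B. f u * u $ i * cnj (u $ j) * x $ j)"
      by (simp add: diag_onb_def matrix_vector_mult_def sum_distrib_right)
    also have "\<dots> = (\<Sum>u\<in>B. f u * (\<Sum>j\<in>UNIV. x $ j * cnj (u $ j)) * u $ i)"
      by (subst sum.swap) (simp add: sum_distrib_left sum_distrib_right algebra_simps)
    finally show ?thesis by (simp add: cinner_cvec sum_component scaleC_complex_def)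
  qed
  then show ?thesis by (simp add: vec_eq_iff)
qed

lemma diag_onb_eigen:
  assumes "onb B" "u \<in> B"
  shows "diag_onb B f *v u = scaleC (f u) u"
proof -
  have "diag_onb B f *v u = (\<Sum>v\<in>B. if v = u then scaleC (f u) u else 0)"
    unfolding diag_onb_mult_vector
    by (intro sum.cong refl) (simp add: cinner_onb[OF assms(1) assms(2)])
  then show ?thesis using onb_finite[OF assms(1)] assms(2) by simp
qed

lemma matrix_eq_diag_onb:
  fixes A :: "complex ^ 'n ^ 'n"
  assumes "onb B" "\<And>u. u \<in> B \<Longrightarrow> A *v u = scaleC (f u) u"
  shows "A = diag_onb B f"
  using assms by (intro matrix_eq_on_onb[OF assms(1)]) (simp add: diag_onb_eigen)

lemma diag_onb_mult:
  assumes "onb B"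
  shows "diag_onb B f ** diag_onb B g = diag_onb B (\<lambda>u. f u * g u)"
  using assms
  by (intro matrix_eq_diag_onb)
     (simp_all add: matrix_vector_mul_assoc[symmetric] diag_onb_eigen
       clinear_scaleC[OF clinear_matrix_vector_mult] scaleC_scaleC mult.commute)

lemma diag_onb_psd:
  assumes "\<And>u. u \<in> B \<Longrightarrow> 0 \<le> g u"
  shows "psd_mat (diag_onb B (\<lambda>u. of_real (g u)))"
  unfolding psd_mat_iff
proof (intro conjI allI)
  show "mat_adjoint (diag_onb B (\<lambda>u. of_real (g u))) = diag_onb B (\<lambda>u. of_real (g u))"
    by (simp add: mat_adjoint_def diag_onb_def vec_eq_iff cnj_sum mult.commute mult.left_commute)
  have "cinner (diag_onb B (\<lambda>u. of_real (g u)) *v v) v =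
      (\<Sum>u\<in>B. of_real (g u) * (cinner v u * cinner u v))" for v
    by (simp add: diag_onb_mult_vector cinner_sum_left cinner_scaleC_left mult.assoc)
  also have "\<dots> v = (\<Sum>u\<in>B. of_real (g u * (cmod (cinner v u))\<^sup>2))" for v
    by (intro sum.cong refl) (metis cinner_commute complex_norm_square of_real_mult)
  finally have "cinner (diag_onb B (\<lambda>u. of_real (g u)) *v v) v =
      (\<Sum>u\<in>B. of_real (g u * (cmod (cinner v u))\<^sup>2))" for v .
  then show "0 \<le> Re (cinner (diag_onb B (\<lambda>u. of_real (g u)) *v v) v)" for v
    using assms by (simp add: Re_sum sum_nonneg)
qed

lemma psd_eigenbasis:
  fixes X :: "complex ^ 'n ^ 'n"
  assumes "psd_mat X"
  obtains B lam where "onb B" "\<And>u. u \<in> B \<Longrightarrow> X *v u = scaleC (of_real (lam u)) u"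
    "\<And>u. u \<in> B \<Longrightarrow> 0 \<le> lam u"
proof -
  obtain B lam where B: "onb B" and eig: "\<And>u. u \<in> B \<Longrightarrow> X *v u = scaleC (of_real (lam u)) u"
    using hermitian_spectral_theorem[OF psd_mat_hermitian[OF assms]] by blast
  have "0 \<le> lam u" if "u \<in> B" for u
    using psd_mat_nonneg[OF assms, of u] eig[OF that] cinner_onb[OF B that that]
    by (simp add: cinner_scaleC_left)
  with B eig show ?thesis using that by blast
qed

lemma psd_eigenvector_of_square:
  fixes R :: "complex ^ 'n ^ 'n"
  assumes R: "psd_mat R" and sq: "R *v (R *v u) = scaleC (of_real (m * m)) u" and "0 \<le> m"
  shows "R *v u = scaleC (of_real m) u"
proof (cases "m = 0")
  case True
  have "cinner (R *v u) (R *v u) = cinner (R *v (R *v u)) u"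
    by (rule cinner_hermitian[OF psd_mat_hermitian[OF R], symmetric])
  then show ?thesis using sq True by (simp add: cinner_eq_zero_iff)
next
  case False
  define z where "z = R *v u - scaleC (of_real m) u"
  have "R *v z + scaleC (of_real m) z = 0"
    by (simp add: z_def matrix_vector_mult_diff_distrib clinear_scaleC[OF clinear_matrix_vector_mult]
        sq scaleC_diff_right scaleC_scaleC)
  then have "Re (cinner (R *v z + scaleC (of_real m) z) z) = 0" by simp
  then have "Re (cinner (R *v z) z) + m * (norm z)\<^sup>2 = 0"
    by (simp add: cinner_add_left cinner_scaleC_left cinner_self_eq_norm_sq)
  moreover have "0 \<le> Re (cinner (R *v z) z)" by (rule psd_mat_nonneg[OF R])
  ultimately have "z = 0" using False \<open>0 \<le> m\<close>
    by (smt (verit) mult_pos_pos zero_less_norm_iff zero_less_power)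
  then show ?thesis by (simp add: z_def)
qed

lemma psd_sqrt_unique:
  fixes R R' :: "complex ^ 'n ^ 'n"
  assumes R: "psd_mat R" and R': "psd_mat R'" and eq: "R' ** R' = R ** R"
  shows "R' = R"
proof -
  obtain B mu where B: "onb B" and eig: "\<And>u. u \<in> B \<Longrightarrow> R *v u = scaleC (of_real (mu u)) u"
    and mu0: "\<And>u. u \<in> B \<Longrightarrow> 0 \<le> mu u"
    using psd_eigenbasis[OF R] by blast
  have "R' *v u = R *v u" if u: "u \<in> B" for u
  proof -
    have "R' *v (R' *v u) = R *v (R *v u)" by (simp add: matrix_vector_mul_assoc eq)
    also have "\<dots> = scaleC (of_real (mu u * mu u)) u"
      by (simp add: eig[OF u] clinear_scaleC[OF clinear_matrix_vector_mult] scaleC_scaleC)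
    finally show ?thesis using psd_eigenvector_of_square[OF R' _ mu0[OF u]] eig[OF u] by simp
  qed
  then show ?thesis by (rule matrix_eq_on_onb[OF B])
qed

lemma psd_sqrt_eq_diag_onb:
  fixes X :: "complex ^ 'n ^ 'n"
  assumes B: "onb B" and eig: "\<And>u. u \<in> B \<Longrightarrow> X *v u = scaleC (of_real (lam u)) u"
    and lam: "\<And>u. u \<in> B \<Longrightarrow> 0 \<le> lam u"
  shows "psd_sqrt X = diag_onb B (\<lambda>u. of_real (sqrt (lam u)))"
    and "psd_mat (diag_onb B (\<lambda>u. of_real (sqrt (lam u))))"
proof -
  define R where "R = diag_onb B (\<lambda>u. of_real (sqrt (lam u)))"
  show psd: "psd_mat (diag_onb B (\<lambda>u. of_real (sqrt (lam u))))" by (rule diag_onb_psd) (simp add: lam)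
  have "R ** R = diag_onb B (\<lambda>u. of_real (sqrt (lam u)) * of_real (sqrt (lam u)))"
    unfolding R_def by (rule diag_onb_mult[OF B])
  also have "\<dots> = X"
    using lam eig by (intro matrix_eq_diag_onb[OF B, symmetric]) (simp flip: of_real_mult)
  finally have RR: "R ** R = X" .
  show "psd_sqrt X = R"
    unfolding psd_sqrt_def
  proof (rule the_equality)
    show "psd_mat R \<and> R ** R = X" using psd RR by (simp add: R_def)
    show "R' = R" if "psd_mat R' \<and> R' ** R' = X" for R'
      using psd_sqrt_unique[of R R'] psd that RR by (simp add: R_def)
  qed
qed

lemma psd_sqrt_eigen:
  fixes X :: "complex ^ 'n ^ 'n"
  assumes "onb B" "\<And>u. u \<in> B \<Longrightarrow> X *v u = scaleC (of_real (lam u)) u"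
    "\<And>u. u \<in> B \<Longrightarrow> 0 \<le> lam u" "u \<in> B"
  shows "psd_sqrt X *v u = scaleC (of_real (sqrt (lam u))) u"
  using assms by (simp add: psd_sqrt_eq_diag_onb(1) diag_onb_eigen)

lemma psd_sqrt_psd:
  assumes "psd_mat X"
  shows "psd_mat (psd_sqrt X)"
proof -
  obtain B lam where B: "onb B" "\<And>u. u \<in> B \<Longrightarrow> X *v u = scaleC (of_real (lam u)) u"
    "\<And>u. u \<in> B \<Longrightarrow> 0 \<le> lam u" using psd_eigenbasis[OF assms] by blast
  then show ?thesis using psd_sqrt_eq_diag_onb[OF B] by simp
qed

lemma psd_sqrt_square: "psd_mat X \<Longrightarrow> psd_sqrt X ** psd_sqrt X = X"
proof -
  assume "psd_mat X"
  then obtain B lam where B: "onb B" "\<And>u. u \<in> B \<Longrightarrow> X *v u = scaleC (of_real (lam u)) u"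
    "\<And>u. u \<in> B \<Longrightarrow> 0 \<le> lam u" using psd_eigenbasis by blast
  show ?thesis
    using B by (intro matrix_eq_on_onb[OF B(1)])
      (simp add: matrix_vector_mul_assoc[symmetric] psd_sqrt_eigen
        clinear_scaleC[OF clinear_matrix_vector_mult] scaleC_scaleC flip: of_real_mult)
qed

lemma Parseval_onb:
  assumes "onb B"
  shows "cinner x y = (\<Sum>f\<in>B. cinner x f * cinner f y)"
proof -
  have "cinner x y = cinner (\<Sum>f\<in>B. scaleC (cinner x f) f) y"
    using onb_expansion[OF assms, of x] by (rule arg_cong)
  then show ?thesis by (simp add: cinner_sum_left cinner_scaleC_left)
qed

text \<open>Both sides are traces: on the left of \<open>P \<alpha>\<close> in the standard basis, on the right of
  \<open>\<alpha> P\<close> in the basis \<open>B\<close>.\<close>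

lemma sum_cinner_axis_hermitian:
  fixes P :: "complex ^ 'n ^ 'n" and \<alpha> :: "complex ^ 'n \<Rightarrow> complex ^ 'n"
  assumes \<alpha>: "clinear \<alpha>" and B: "onb B" and P: "mat_adjoint P = P"
  shows "(\<Sum>j\<in>UNIV. cinner (\<alpha> (axis j 1)) (P *v axis j 1)) = (\<Sum>f\<in>B. cinner (\<alpha> (P *v f)) f)"
proof -
  let ?e = "\<lambda>j. axis j 1 :: complex ^ 'n"
  have "(\<Sum>j\<in>UNIV. cinner (\<alpha> (?e j)) (P *v ?e j)) =
      (\<Sum>j\<in>UNIV. \<Sum>f\<in>B. cinner (\<alpha> (?e j)) f * cinner f (P *v ?e j))"
    by (intro sum.cong refl) (rule Parseval_onb[OF B])
  also have "\<dots> = (\<Sum>f\<in>B. \<Sum>j\<in>UNIV. cinner (P *v f) (?e j) * cinner (\<alpha> (?e j)) f)"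
    by (subst sum.swap) (simp add: cinner_hermitian[OF P] mult.commute)
  also have "\<dots> = (\<Sum>f\<in>B. cinner (\<alpha> (\<Sum>j\<in>UNIV. scaleC (cinner (P *v f) (?e j)) (?e j))) f)"
    by (simp add: clinear_sum[OF \<alpha>] clinear_scaleC[OF \<alpha>] cinner_sum_left cinner_scaleC_left)
  finally show ?thesis by (simp only: cvec_axis_expansion)
qed

lemma matrix_vector_mult_axis_nth: "((M :: complex ^ 'n ^ 'm) *v axis j 1) $ i = M $ i $ j"
proof -
  have "(M *v axis j 1) $ i = (\<Sum>k\<in>UNIV. if k = j then M $ i $ j else 0)"
    unfolding matrix_vector_mult_def vec_lambda_beta by (intro sum.cong refl) (auto simp: axis_def)
  then show ?thesis by simp
qed

lemma mat_trace_onb: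
  fixes X :: "complex ^ 'n ^ 'n"
  assumes "onb B"
  shows "mat_trace X = (\<Sum>f\<in>B. cinner (X *v f) f)"
proof -
  have "mat_adjoint (mat 1) = (mat 1 :: complex ^ 'n ^ 'n)"
    by (simp add: mat_adjoint_def mat_def vec_eq_iff)
  from sum_cinner_axis_hermitian[OF clinear_matrix_vector_mult assms this, of X]
  show ?thesis by (simp add: mat_trace_def cinner_axis_right matrix_vector_mult_axis_nth)
qed

section \<open>Gram matrices and polar decomposition\<close>

definition gram :: "('l::finite \<Rightarrow> 'h::complex_inner) \<Rightarrow> complex ^ 'l ^ 'l" where
  "gram v = (\<chi> i j. cinner (v j) (v i))"

definition synthesis :: "('l::finite \<Rightarrow> 'h::complex_inner) \<Rightarrow> complex ^ 'l \<Rightarrow> 'h" where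
  "synthesis v c = (\<Sum>j\<in>UNIV. scaleC (c $ j) (v j))"

lemma Qmat_eq_gram: "Qmat c \<eta> = gram (\<lambda>j. c j \<eta>)"
  by (simp add: Qmat_def gram_def)

lemma clinear_synthesis: "clinear (synthesis v)"
  by (rule clinearI)
    (simp_all add: synthesis_def scaleC_add_left sum.distrib scaleC_sum_right scaleC_scaleC
      scaleC_complex_def)

lemma synthesis_axis: "synthesis v (axis j 1) = v j"
proof -
  have "synthesis v (axis j 1) = (\<Sum>k\<in>UNIV. if k = j then v j else 0)"
    unfolding synthesis_def by (intro sum.cong refl) (auto simp: axis_def scaleC_one)
  then show ?thesis by simp
qed

lemma cinner_gram: "cinner (gram v *v c) d = cinner (synthesis v c) (synthesis v d)"
proof -
  have "cinner (gram v *v c) d = (\<Sum>i\<in>UNIV. (\<Sum>j\<in>UNIV. cinner (v j) (v i) * c $ j) * cnj (d $ i))"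
    by (simp add: cinner_cvec gram_def matrix_vector_mult_def)
  also have "\<dots> = (\<Sum>i\<in>UNIV. \<Sum>j\<in>UNIV. c $ j * (cnj (d $ i) * cinner (v j) (v i)))"
    by (intro sum.cong refl)
      (simp add: sum_distrib_right sum_distrib_left mult.commute mult.left_commute)
  also have "\<dots> = cinner (synthesis v c) (synthesis v d)"
    unfolding synthesis_def
    by (simp add: cinner_sum_left cinner_sum_right cinner_scaleC_left cinner_scaleC_right
        sum_distrib_left mult.commute mult.left_commute)
  finally show ?thesis .
qed

lemma psd_gram: "psd_mat (gram v)"
  unfolding psd_mat_iff cinner_gram
proof (intro conjI allI cinner_ge_zero)
  have "cnj (cinner (v i) (v j)) = cinner (v j) (v i)" for i j
    by (rule cinner_commute[symmetric])
  then show "mat_adjoint (gram v) = gram v" by (simp add: mat_adjoint_def gram_def vec_eq_iff)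
qed

text \<open>For orthonormal families \<open>p\<close> and \<open>w\<close> this is the partial isometry mapping each \<open>p k\<close>
  to \<open>w k\<close>; \<open>orthonormal_map K w p\<close> is its adjoint.\<close>

definition orthonormal_map :: "'i set \<Rightarrow> ('i \<Rightarrow> 'a::complex_inner) \<Rightarrow> ('i \<Rightarrow> 'b::complex_inner) \<Rightarrow> 'a \<Rightarrow> 'b"
  where "orthonormal_map K p w x = (\<Sum>k\<in>K. scaleC (cinner x (p k)) (w k))"

lemma cinner_orthonormal_map:
  "cinner (orthonormal_map K p w x) y = cinner x (orthonormal_map K w p y)"
  unfolding orthonormal_map_def
  by (simp add: cinner_sum_left cinner_sum_right cinner_scaleC_left cinner_scaleC_right
      cinner_commute[of y "w k" for k] mult.commute)

lemma orthonormal_map_apply: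
  assumes "finite K" "orthonormal_on K p" "k \<in> K"
  shows "orthonormal_map K p w (p k) = w k"
proof -
  have "orthonormal_map K p w (p k) = (\<Sum>m\<in>K. if m = k then w k else 0)"
    unfolding orthonormal_map_def
    using orthonormal_onD[OF assms(2) assms(3)] by (intro sum.cong refl) (auto simp: scaleC_one)
  then show ?thesis using assms(1,3) by simp
qed

lemma contraction_orthonormal_map:
  assumes "finite K" "orthonormal_on K p" "orthonormal_on K w"
  shows "contraction (orthonormal_map K p w)"
proof (rule contractionI)
  show "clinear (orthonormal_map K p w)"
    by (rule clinearI) (simp_all add: orthonormal_map_def cinner_add_left scaleC_add_left
        sum.distrib cinner_scaleC_left scaleC_sum_right scaleC_scaleC)
  have sq: "(norm (orthonormal_map K p w x))\<^sup>2 \<le> (norm x)\<^sup>2" for x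
    unfolding orthonormal_map_def power2_norm_sum_orthonormal[OF assms(3,1)]
    by (rule Bessel_inequality[OF assms(2,1)])
  show "norm (orthonormal_map K p w x) \<le> norm x" for x
    using power2_le_imp_le[OF sq norm_ge_zero] .
qed

lemma orthonormal_on_normalised:
  assumes K: "orthonormal_on K id" and s: "\<And>f. f \<in> K \<Longrightarrow> 0 < s f"
    and z: "\<And>f g. f \<in> K \<Longrightarrow> g \<in> K \<Longrightarrow> cinner (z f) (z g) = of_real (s f * s f) * cinner f g"
  shows "orthonormal_on K (\<lambda>f. scaleC (of_real (1 / s f)) (z f))"
  unfolding orthonormal_on_def
proof (intro ballI)
  fix f f' assume "f \<in> K" "f' \<in> K"
  then show "cinner (scaleC (of_real (1 / s f)) (z f)) (scaleC (of_real (1 / s f')) (z f')) =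
      (if f = f' then 1 else 0)"
    using z[of f f'] orthonormal_onD[OF K, of f f'] s[of f]
    by (auto simp: cinner_scaleC_left cinner_scaleC_right simp flip: of_real_mult)
qed

lemma exists_polar_partial_isometry:
  fixes z :: "'a::complex_inner \<Rightarrow> 'b::complex_inner"
  assumes B: "finite B" "orthonormal_on B id" and s: "\<And>f. f \<in> B \<Longrightarrow> 0 \<le> s f"
    and z: "\<And>f g. f \<in> B \<Longrightarrow> g \<in> B \<Longrightarrow> cinner (z f) (z g) = of_real (s f * s f) * cinner f g"
  obtains U U' where "contraction U" "contraction U'" "\<And>x y. cinner (U x) y = cinner x (U' y)"
    "\<And>f. f \<in> B \<Longrightarrow> U (scaleC (of_real (s f)) f) = z f"
    "\<And>f. f \<in> B \<Longrightarrow> U' (z f) = scaleC (of_real (s f)) f"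
proof -
  define K where "K = {f \<in> B. 0 < s f}"
  define g where "g f = scaleC (of_real (1 / s f)) (z f)" for f
  have K: "finite K" "orthonormal_on K id"
    using B orthonormal_on_subset[OF B(2)] by (auto simp: K_def)
  have g: "orthonormal_on K g"
    unfolding g_def by (rule orthonormal_on_normalised[OF K(2)]) (simp_all add: K_def z)
  define U where "U = orthonormal_map K id g"
  define U' where "U' = orthonormal_map K g id"
  have U: "contraction U" and U': "contraction U'"
    unfolding U_def U'_def using contraction_orthonormal_map K g by blast+
  have zg: "z f = scaleC (of_real (s f)) (g f)" if "f \<in> K" for f
    using that by (simp add: K_def g_def scaleC_scaleC scaleC_one flip: of_real_mult)
  have s0: "s f = 0" and z0: "z f = 0" if "f \<in> B" "f \<notin> K" for f
  proof -
    show "s f = 0" using s that by (force simp: K_def)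
    then show "z f = 0" using z[OF that(1) that(1)] by (simp add: cinner_eq_zero_iff)
  qed
  have "U (scaleC (of_real (s f)) f) = z f" if "f \<in> B" for f
  proof (cases "f \<in> K")
    case True
    then show ?thesis
      using orthonormal_map_apply[OF K True, of g] zg[OF True]
      by (simp add: U_def clinear_scaleC[OF contraction_clinear[OF U, unfolded U_def]])
  qed (simp add: s0[OF that] z0[OF that] clinear_zero[OF contraction_clinear[OF U]])
  moreover have "U' (z f) = scaleC (of_real (s f)) f" if "f \<in> B" for f
  proof (cases "f \<in> K")
    case True
    then show ?thesis
      using orthonormal_map_apply[OF K(1) g True, of id] zg[OF True]
      by (simp add: U'_def clinear_scaleC[OF contraction_clinear[OF U', unfolded U'_def]])
  qed (simp add: s0[OF that] z0[OF that] clinear_zero[OF contraction_clinear[OF U']])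
  ultimately show ?thesis
    using that[OF U U'] by (simp add: U_def U'_def cinner_orthonormal_map)
qed

text \<open>The polar decomposition \<open>V = J (V\<^sup>* V)\<^sup>1\<^sup>/\<^sup>2\<close> of the synthesis operator \<open>V\<close>
  of \<open>v\<close>; note \<open>gram v = V\<^sup>* V\<close>.\<close>

lemma gram_factorization:
  fixes v :: "'l::finite \<Rightarrow> 'h::complex_inner"
  obtains J J' where "contraction J" "contraction J'" "\<And>c h. cinner (J c) h = cinner c (J' h)"
    "\<And>c. J (psd_sqrt (gram v) *v c) = synthesis v c"
    "\<And>c. J' (synthesis v c) = psd_sqrt (gram v) *v c"
proof -
  obtain B lam where B: "onb B" and eig: "\<And>u. u \<in> B \<Longrightarrow> gram v *v u = scaleC (of_real (lam u)) u"
    and lam: "\<And>u. u \<in> B \<Longrightarrow> 0 \<le> lam u"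
    using psd_eigenbasis[OF psd_gram] by blast
  have P: "psd_sqrt (gram v) *v u = scaleC (of_real (sqrt (lam u))) u" if "u \<in> B" for u
    using B eig lam that by (rule psd_sqrt_eigen)
  have s: "0 \<le> sqrt (lam p)" if "p \<in> B" for p using lam[OF that] by simp
  have "cinner (synthesis v p) (synthesis v q) = of_real (sqrt (lam p) * sqrt (lam p)) * cinner p q"
    if "p \<in> B" "q \<in> B" for p q
    using eig[OF that(1)] lam[OF that(1)] by (simp flip: cinner_gram add: cinner_scaleC_left)
  then obtain J J' where J: "contraction J" "contraction J'" "\<And>c h. cinner (J c) h = cinner c (J' h)"
    and JV: "\<And>p. p \<in> B \<Longrightarrow> J (scaleC (of_real (sqrt (lam p))) p) = synthesis v p"
    and J'V: "\<And>p. p \<in> B \<Longrightarrow> J' (synthesis v p) = scaleC (of_real (sqrt (lam p))) p"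
    using exists_polar_partial_isometry[where s = "\<lambda>p. sqrt (lam p)" and z = "synthesis v",
        OF onb_finite[OF B] onb_orthonormal[OF B] s] by blast
  have "J (psd_sqrt (gram v) *v c) = synthesis v c" for c
    by (rule clinear_eq_on_onb[OF clinear_compose[OF contraction_clinear[OF J(1)]
          clinear_matrix_vector_mult] clinear_synthesis B]) (simp add: P JV)
  moreover have "J' (synthesis v c) = psd_sqrt (gram v) *v c" for c
    by (rule clinear_eq_on_onb[OF clinear_compose[OF contraction_clinear[OF J(2)] clinear_synthesis]
          clinear_matrix_vector_mult B]) (simp add: P J'V)
  ultimately show ?thesis using that J by blast
qed

lemma psd_congruence:
  fixes P Y :: "complex ^ 'n ^ 'n"
  assumes P: "mat_adjoint P = P" and Y: "psd_mat Y"
  shows "psd_mat (P ** Y ** P)"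
proof -
  have M: "(P ** Y ** P) *v x = P *v (Y *v (P *v x))" for x
    by (simp add: matrix_vector_mul_assoc matrix_mul_assoc)
  have "cinner ((P ** Y ** P) *v x) y = cinner x ((P ** Y ** P) *v y)" for x y
    by (simp add: M cinner_hermitian[OF P] cinner_hermitian[OF psd_mat_hermitian[OF Y]])
  moreover have "0 \<le> Re (cinner ((P ** Y ** P) *v x) x)" for x
    using psd_mat_nonneg[OF Y, of "P *v x"] by (simp add: M cinner_hermitian[OF P])
  ultimately show ?thesis by (simp add: psd_mat_iff hermitianI)
qed

text \<open>The \<open>s f\<close> are the singular values of \<open>Y\<^sup>1\<^sup>/\<^sup>2 X\<^sup>1\<^sup>/\<^sup>2\<close>, so \<open>tgm X Y\<close> is its trace
  norm.\<close>

lemma tgm_singular_values: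
  fixes X Y :: "complex ^ 'l ^ 'l"
  assumes X: "psd_mat X" and Y: "psd_mat Y"
  obtains B s where "onb B" "\<And>f. f \<in> B \<Longrightarrow> 0 \<le> s f" "tgm X Y = (\<Sum>f\<in>B. s f)"
    "\<And>f g. f \<in> B \<Longrightarrow> g \<in> B \<Longrightarrow>
      cinner ((psd_sqrt Y ** psd_sqrt X) *v f) ((psd_sqrt Y ** psd_sqrt X) *v g) =
      of_real (s f * s f) * cinner f g"
proof -
  define P where "P = psd_sqrt X"
  define Q where "Q = psd_sqrt Y"
  define M where "M = P ** Y ** P"
  have hP: "mat_adjoint P = P" unfolding P_def by (rule psd_mat_hermitian[OF psd_sqrt_psd[OF X]])
  have hQ: "mat_adjoint Q = Q" unfolding Q_def by (rule psd_mat_hermitian[OF psd_sqrt_psd[OF Y]])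
  have M: "psd_mat M" unfolding M_def by (rule psd_congruence[OF hP Y])
  define S where "S = psd_sqrt M"
  obtain B s where B: "onb B" and eig: "\<And>f. f \<in> B \<Longrightarrow> S *v f = scaleC (of_real (s f)) f"
    and s: "\<And>f. f \<in> B \<Longrightarrow> 0 \<le> s f"
    using psd_eigenbasis[OF psd_sqrt_psd[OF M]] unfolding S_def by blast
  have "tgm X Y = Re (\<Sum>f\<in>B. cinner (S *v f) f)"
    by (simp add: tgm_def S_def M_def P_def mat_trace_onb[OF B])
  also have "\<dots> = (\<Sum>f\<in>B. s f)"
    using eig cinner_onb[OF B] by (simp add: Re_sum cinner_scaleC_left)
  finally have "tgm X Y = (\<Sum>f\<in>B. s f)" .
  moreover have "cinner ((Q ** P) *v f) ((Q ** P) *v g) = of_real (s f * s f) * cinner f g"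
    if "f \<in> B" "g \<in> B" for f g
  proof -
    have "cinner ((Q ** P) *v f) ((Q ** P) *v g) = cinner (Q *v (Q *v (P *v f))) (P *v g)"
      by (simp add: matrix_vector_mul_assoc[symmetric] cinner_hermitian[OF hQ])
    also have "Q *v (Q *v (P *v f)) = Y *v (P *v f)"
      using matrix_vector_mul_assoc[of Q Q "P *v f"] by (simp only: Q_def psd_sqrt_square[OF Y])
    also have "cinner (Y *v (P *v f)) (P *v g) = cinner (P *v (Y *v (P *v f))) g"
      by (rule cinner_hermitian[OF hP, symmetric])
    also have "P *v (Y *v (P *v f)) = M *v f"
      by (simp add: M_def matrix_vector_mul_assoc matrix_mul_assoc)
    also have "M *v f = S *v (S *v f)"
      by (simp add: S_def matrix_vector_mul_assoc psd_sqrt_square[OF M])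
    finally show ?thesis
      using that by (simp add: eig clinear_scaleC[OF clinear_matrix_vector_mult] scaleC_scaleC
          cinner_scaleC_left)
  qed
  ultimately show ?thesis using that B s unfolding P_def Q_def by blast
qed

section \<open>Trace duality for Gram factorisations\<close>

lemma cmod_sum_cinner_contraction_onb_le:
  assumes C: "contraction C" and B: "onb B" and z: "\<And>f. f \<in> B \<Longrightarrow> norm (z f) \<le> s f"
  shows "cmod (\<Sum>f\<in>B. cinner (C (z f)) f) \<le> (\<Sum>f\<in>B. s f)"
proof -
  have "cmod (\<Sum>f\<in>B. cinner (C (z f)) f) \<le> (\<Sum>f\<in>B. cmod (cinner (C (z f)) f))"
    by (rule norm_sum)
  also have "\<dots> \<le> (\<Sum>f\<in>B. s f)"
  proof (rule sum_mono)
    fix f assume f: "f \<in> B"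
    have "norm f = 1" using cinner_onb[OF B f f] by (simp add: norm_eq_sqrt_cinner)
    then show "cmod (cinner (C (z f)) f) \<le> s f"
      using cinner_Cauchy_Schwarz[of "C (z f)" f] contraction_norm[OF C, of "z f"] z[OF f] by simp
  qed
  finally show ?thesis .
qed

text \<open>Write \<open>u\<^sub>j = J\<^sub>u Q e\<^sub>j\<close> and \<open>v\<^sub>j = J\<^sub>v P e\<^sub>j\<close> with \<open>P, Q\<close> the square roots of the Gram
  matrices; then \<open>\<Sum>\<^sub>j \<langle>x u\<^sub>j, v\<^sub>j\<rangle>\<close> is the trace of \<open>C Q P\<close> for the contraction
  \<open>C = J\<^sub>v\<^sup>* x J\<^sub>u\<close>, which is at most the trace norm of \<open>Q P\<close>.\<close>

lemma cmod_sum_cinner_contraction_le_tgm: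
  fixes u v :: "'l::finite \<Rightarrow> 'h::complex_inner"
  assumes x: "contraction x"
  shows "cmod (\<Sum>j\<in>UNIV. cinner (x (u j)) (v j)) \<le> tgm (gram v) (gram u)"
proof -
  obtain Ju Ju' where Ju: "contraction Ju" "\<And>c. Ju (psd_sqrt (gram u) *v c) = synthesis u c"
    using gram_factorization[of u] by metis
  obtain Jv Jv' where Jv: "contraction Jv'" "\<And>c h. cinner (Jv c) h = cinner c (Jv' h)"
    "\<And>c. Jv (psd_sqrt (gram v) *v c) = synthesis v c"
    using gram_factorization[of v] by metis
  define P where "P = psd_sqrt (gram v)"
  define Q where "Q = psd_sqrt (gram u)"
  obtain B s where B: "onb B" and s: "\<And>f. f \<in> B \<Longrightarrow> 0 \<le> s f"
    and tgm: "tgm (gram v) (gram u) = (\<Sum>f\<in>B. s f)"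
    and QP: "\<And>f g. f \<in> B \<Longrightarrow> g \<in> B \<Longrightarrow>
      cinner ((Q ** P) *v f) ((Q ** P) *v g) = of_real (s f * s f) * cinner f g"
    using tgm_singular_values[OF psd_gram psd_gram, of v u] unfolding P_def Q_def by blast
  define C where "C c = Jv' (x (Ju c))" for c
  have C: "contraction C"
    unfolding C_def by (rule contraction_compose[OF Jv(1) contraction_compose[OF x Ju(1)]])
  have "(\<Sum>j\<in>UNIV. cinner (x (u j)) (v j)) =
      (\<Sum>j\<in>UNIV. cinner (C (Q *v axis j 1)) (P *v axis j 1))"
  proof (intro sum.cong refl)
    fix j
    have "cinner (x (u j)) (v j) = cinner (x (Ju (Q *v axis j 1))) (Jv (P *v axis j 1))"
      by (simp add: Ju(2) Jv(3) P_def Q_def synthesis_axis)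
    also have "\<dots> = cinner (C (Q *v axis j 1)) (P *v axis j 1)"
      by (metis C_def Jv(2) cinner_commute)
    finally show "cinner (x (u j)) (v j) = cinner (C (Q *v axis j 1)) (P *v axis j 1)" .
  qed
  also have "\<dots> = (\<Sum>f\<in>B. cinner (C ((Q ** P) *v f)) f)"
    using sum_cinner_axis_hermitian[OF clinear_compose[OF contraction_clinear[OF C]
        clinear_matrix_vector_mult] B psd_mat_hermitian[OF psd_sqrt_psd[OF psd_gram]]]
    by (simp add: P_def Q_def matrix_vector_mul_assoc)
  finally have "(\<Sum>j\<in>UNIV. cinner (x (u j)) (v j)) = (\<Sum>f\<in>B. cinner (C ((Q ** P) *v f)) f)" .
  moreover have "norm ((Q ** P) *v f) \<le> s f" if "f \<in> B" for f
    using QP[OF that that] cinner_onb[OF B that that] s[OF that]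
      norm_eq_of_cinner_self[of "(Q ** P) *v f" "s f"] by simp
  ultimately show ?thesis
    using cmod_sum_cinner_contraction_onb_le[OF C B] by (simp add: tgm)
qed

text \<open>Equality is attained at \<open>x = J\<^sub>v D J\<^sub>u\<^sup>*\<close>, where \<open>D\<close> is the contraction from the polar
  decomposition of \<open>Q P\<close>.\<close>

lemma sum_cinner_contraction_attains_tgm:
  fixes u v :: "'l::finite \<Rightarrow> 'h::complex_inner"
  obtains x where "contraction x" "(\<Sum>j\<in>UNIV. cinner (x (u j)) (v j)) = of_real (tgm (gram v) (gram u))"
proof -
  obtain Ju Ju' where Ju: "contraction Ju'" "\<And>c. Ju' (synthesis u c) = psd_sqrt (gram u) *v c"
    using gram_factorization[of u] by metis
  obtain Jv Jv' where Jv: "contraction Jv" "\<And>c h. cinner (Jv c) h = cinner c (Jv' h)"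
    "\<And>c. Jv' (synthesis v c) = psd_sqrt (gram v) *v c"
    using gram_factorization[of v] by metis
  define P where "P = psd_sqrt (gram v)"
  define Q where "Q = psd_sqrt (gram u)"
  obtain B s where B: "onb B" and s: "\<And>f. f \<in> B \<Longrightarrow> 0 \<le> s f"
    and tgm: "tgm (gram v) (gram u) = (\<Sum>f\<in>B. s f)"
    and QP: "\<And>f g. f \<in> B \<Longrightarrow> g \<in> B \<Longrightarrow>
      cinner ((Q ** P) *v f) ((Q ** P) *v g) = of_real (s f * s f) * cinner f g"
    using tgm_singular_values[OF psd_gram psd_gram, of v u] unfolding P_def Q_def by blast
  obtain D where D: "contraction D" "\<And>f. f \<in> B \<Longrightarrow> D ((Q ** P) *v f) = scaleC (of_real (s f)) f"
    using exists_polar_partial_isometry[OF onb_finite[OF B] onb_orthonormal[OF B] s QP] by metis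
  define x where "x h = Jv (D (Ju' h))" for h
  have "contraction x"
    unfolding x_def by (rule contraction_compose[OF Jv(1) contraction_compose[OF D(1) Ju(1)]])
  moreover have "(\<Sum>j\<in>UNIV. cinner (x (u j)) (v j)) = of_real (tgm (gram v) (gram u))"
  proof -
    have "(\<Sum>j\<in>UNIV. cinner (x (u j)) (v j)) =
        (\<Sum>j\<in>UNIV. cinner (D (Q *v axis j 1)) (P *v axis j 1))"
      by (simp add: x_def Jv(2) Ju(2) Jv(3) P_def Q_def flip: synthesis_axis[of u] synthesis_axis[of v])
    also have "\<dots> = (\<Sum>f\<in>B. cinner (D ((Q ** P) *v f)) f)"
      using sum_cinner_axis_hermitian[OF clinear_compose[OF contraction_clinear[OF D(1)]
          clinear_matrix_vector_mult] B psd_mat_hermitian[OF psd_sqrt_psd[OF psd_gram]]]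
      by (simp add: P_def Q_def matrix_vector_mul_assoc)
    also have "\<dots> = of_real (tgm (gram v) (gram u))"
      using cinner_onb[OF B] by (simp add: D(2) tgm cinner_scaleC_left)
    finally show ?thesis .
  qed
  ultimately show ?thesis using that by blast
qed

lemma cSup_eq_if_mutually_bounded:
  fixes L R :: "real set"
  assumes "L \<noteq> {}" "R \<noteq> {}" "bdd_above L"
    and RL: "\<And>r. r \<in> R \<Longrightarrow> \<exists>l\<in>L. r \<le> l"
    and LR: "\<And>l M. l \<in> L \<Longrightarrow> (\<And>r. r \<in> R \<Longrightarrow> r \<le> M) \<Longrightarrow> l \<le> M"
  shows "Sup L = Sup R"
proof (rule antisym)
  have "bdd_above R"
  proof -
    obtain M where M: "\<And>l. l \<in> L \<Longrightarrow> l \<le> M" using \<open>bdd_above L\<close> by (auto simp: bdd_above_def)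
    show ?thesis
    proof (rule bdd_aboveI[of _ M])
      fix r assume "r \<in> R"
      then obtain l where "l \<in> L" "r \<le> l" using RL by blast
      then show "r \<le> M" using M[of l] by linarith
    qed
  qed
  show "Sup L \<le> Sup R"
  proof (rule cSup_least[OF \<open>L \<noteq> {}\<close>])
    show "l \<le> Sup R" if "l \<in> L" for l
      by (rule LR[OF that cSup_upper[OF _ \<open>bdd_above R\<close>]])
  qed
  show "Sup R \<le> Sup L" by (rule cSup_mono[OF \<open>R \<noteq> {}\<close> \<open>bdd_above L\<close> RL])
qed

lemma tgm_nonneg:
  fixes X Y :: "complex ^ 'l ^ 'l"
  assumes "psd_mat X" "psd_mat Y"
  shows "0 \<le> tgm X Y"
proof -
  obtain B s where "onb B" "\<And>f. f \<in> B \<Longrightarrow> 0 \<le> s f" "tgm X Y = (\<Sum>f\<in>B. s f)"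
    "\<And>f g. f \<in> B \<Longrightarrow> g \<in> B \<Longrightarrow>
      cinner ((psd_sqrt Y ** psd_sqrt X) *v f) ((psd_sqrt Y ** psd_sqrt X) *v g) =
      of_real (s f * s f) * cinner f g"
    using tgm_singular_values[OF assms] by blast
  then show ?thesis by (simp add: sum_nonneg)
qed

lemma onorm_le_of_unit:
  fixes f :: "'a::real_normed_vector \<Rightarrow> 'b::real_normed_vector"
  assumes f: "bounded_linear f" and "0 \<le> M" and unit: "\<And>x. norm x = 1 \<Longrightarrow> norm (f x) \<le> M"
  shows "onorm f \<le> M"
proof (rule onorm_bound[OF \<open>0 \<le> M\<close>])
  fix x
  show "norm (f x) \<le> M * norm x"
  proof (cases "x = 0")
    case False
    have "f x = scaleR (norm x) (f (scaleR (1 / norm x) x))"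
      using False by (simp add: linear_scale[OF bounded_linear.linear[OF f]])
    then have "norm (f x) = norm x * norm (f (scaleR (1 / norm x) x))" by simp
    also have "\<dots> \<le> norm x * M"
      by (rule mult_left_mono[OF unit norm_ge_zero]) (simp add: False)
    finally show ?thesis by (simp add: mult.commute)
  qed (simp add: linear_0[OF bounded_linear.linear[OF f]])
qed

lemma bounded_linear_elem_op:
  assumes "\<And>j. bop (a j)" "\<And>j. bop (b j)" "bop x"
  shows "bounded_linear (elem_op a b x)"
proof -
  have "bounded_linear (\<lambda>v. a j (x (b j v)))" for j
    using bounded_linear_compose[of "a j" "\<lambda>v. x (b j v)"] bounded_linear_compose[of x "b j"] assms
    by (simp add: bop_def)
  then show ?thesis unfolding elem_op_def by (rule bounded_linear_sum)
qed

lemma onorm_elem_op_le: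
  assumes a: "\<And>j. bop (a j)" and b: "\<And>j. bop (b j)" and x: "contraction x"
  shows "onorm (elem_op a b x) \<le> (\<Sum>j\<in>UNIV. onorm (a j) * onorm (b j))"
proof -
  have x': "bounded_linear x" "onorm x \<le> 1" using x by (simp_all flip: bop_onorm_le_1_iff add: bop_def)
  have bl: "bounded_linear (a j)" "bounded_linear (b j)" for j using a b by (simp_all add: bop_def)
  have xb: "bounded_linear (x \<circ> b j)" for j
    unfolding comp_def by (rule bounded_linear_compose[OF x'(1) bl(2)])
  have axb: "bounded_linear (a j \<circ> (x \<circ> b j))" for j
    unfolding comp_def by (rule bounded_linear_compose[OF bl(1) xb[unfolded comp_def]])
  have "onorm (elem_op a b x) \<le> (\<Sum>j\<in>UNIV. onorm (a j \<circ> (x \<circ> b j)))"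
    using onorm_sum[of UNIV "\<lambda>j. a j \<circ> (x \<circ> b j)"] axb by (simp add: elem_op_def)
  also have "\<dots> \<le> (\<Sum>j\<in>UNIV. onorm (a j) * onorm (b j))"
  proof (rule sum_mono)
    fix j
    have "onorm (a j \<circ> (x \<circ> b j)) \<le> onorm (a j) * onorm (x \<circ> b j)"
      by (rule onorm_compose[OF bl(1) xb])
    also have "\<dots> \<le> onorm (a j) * (onorm x * onorm (b j))"
      by (rule mult_left_mono[OF onorm_compose[OF x'(1) bl(2)] onorm_pos_le[OF bl(1)]])
    also have "\<dots> \<le> onorm (a j) * onorm (b j)"
      by (rule mult_left_mono[OF mult_left_le_one_le[OF onorm_pos_le[OF bl(2)]
            onorm_pos_le[OF x'(1)] x'(2)] onorm_pos_le[OF bl(1)]])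
    finally show "onorm (a j \<circ> (x \<circ> b j)) \<le> onorm (a j) * onorm (b j)" .
  qed
  finally show ?thesis .
qed

lemma cinner_elem_op:
  fixes a b :: "'l::finite \<Rightarrow> 'h::{complex_inner,complete_space} \<Rightarrow> 'h"
  assumes "\<And>j. bop (a j)"
  shows "cinner (elem_op a b x \<eta>) \<xi> = (\<Sum>j\<in>UNIV. cinner (x (b j \<eta>)) (adj (a j) \<xi>))"
  by (simp add: elem_op_def cinner_sum_left cinner_adj[OF assms])

lemma onorm_elem_op_le_tgm_bound:
  fixes a b :: "'l::finite \<Rightarrow> 'h::{complex_inner,complete_space} \<Rightarrow> 'h"
  assumes a: "\<And>j. bop (a j)" and b: "\<And>j. bop (b j)" and x: "contraction x"
    and e: "norm (e :: 'h) = 1"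
    and M: "\<And>\<xi> \<eta>. norm \<xi> = 1 \<Longrightarrow> norm \<eta> = 1 \<Longrightarrow> tgm (Qmat (\<lambda>j. adj (a j)) \<xi>) (Qmat b \<eta>) \<le> M"
  shows "onorm (elem_op a b x) \<le> M"
proof (rule onorm_le_of_unit)
  show "bounded_linear (elem_op a b x)"
    using a b x by (intro bounded_linear_elem_op) (simp_all flip: bop_onorm_le_1_iff)
  have "0 \<le> tgm (Qmat (\<lambda>j. adj (a j)) e) (Qmat b e)"
    unfolding Qmat_eq_gram by (rule tgm_nonneg[OF psd_gram psd_gram])
  then show "0 \<le> M" using M[OF e e] by linarith
  fix \<eta> :: 'h assume \<eta>: "norm \<eta> = 1"
  let ?y = "elem_op a b x \<eta>"
  show "norm ?y \<le> M"
  proof (cases "?y = 0")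
    case False
    define \<xi> where "\<xi> = scaleC (of_real (1 / norm ?y)) ?y"
    have \<xi>: "norm \<xi> = 1" using False by (simp add: \<xi>_def norm_scaleC norm_divide)
    have "norm ?y = cmod (cinner ?y \<xi>)"
      using False by (simp add: \<xi>_def cinner_scaleC_right cinner_self_eq_norm_sq power2_eq_square)
    also have "\<dots> \<le> tgm (Qmat (\<lambda>j. adj (a j)) \<xi>) (Qmat b \<eta>)"
      unfolding cinner_elem_op[OF a] Qmat_eq_gram by (rule cmod_sum_cinner_contraction_le_tgm[OF x])
    also have "\<dots> \<le> M" by (rule M[OF \<xi> \<eta>])
    finally show ?thesis .
  qed (simp add: \<open>0 \<le> M\<close>)
qed

lemma tgm_le_onorm_elem_op:
  fixes a b :: "'l::finite \<Rightarrow> 'h::{complex_inner,complete_space} \<Rightarrow> 'h"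
  assumes a: "\<And>j. bop (a j)" and b: "\<And>j. bop (b j)" and "norm \<xi> = 1" "norm \<eta> = 1"
  shows "\<exists>x. contraction x \<and> tgm (Qmat (\<lambda>j. adj (a j)) \<xi>) (Qmat b \<eta>) \<le> onorm (elem_op a b x)"
proof -
  obtain x where x: "contraction x"
    and sum: "(\<Sum>j\<in>UNIV. cinner (x (b j \<eta>)) (adj (a j) \<xi>)) =
      of_real (tgm (Qmat (\<lambda>j. adj (a j)) \<xi>) (Qmat b \<eta>))"
    using sum_cinner_contraction_attains_tgm[of "\<lambda>j. b j \<eta>" "\<lambda>j. adj (a j) \<xi>"]
    unfolding Qmat_eq_gram by blast
  have xb: "bop x" using x by (simp flip: bop_onorm_le_1_iff)
  have "tgm (Qmat (\<lambda>j. adj (a j)) \<xi>) (Qmat b \<eta>) \<le> cmod (cinner (elem_op a b x \<eta>) \<xi>)"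
    unfolding cinner_elem_op[OF a] sum by simp
  also have "\<dots> \<le> norm (elem_op a b x \<eta>)"
    using cinner_Cauchy_Schwarz[of "elem_op a b x \<eta>" \<xi>] \<open>norm \<xi> = 1\<close> by simp
  also have "\<dots> \<le> onorm (elem_op a b x)"
    using onorm[OF bounded_linear_elem_op[where a = a and b = b, OF a b xb], of \<eta>] \<open>norm \<eta> = 1\<close>
    by simp
  finally show ?thesis using x by blast
qed

theorem theorem1p4:
  fixes a b :: "'l::finite \<Rightarrow> 'h::{complex_inner, complete_space} \<Rightarrow> 'h"
  assumes "\<And>j. bop (a j)"
    and "\<And>j. bop (b j)"
    and "\<exists>x::'h. x \<noteq> 0"
  shows "superop_norm (elem_op a b) =
    Sup {tgm (Qmat (\<lambda>j. adj (a j)) \<xi>) (Qmat b \<eta>) | \<xi> \<eta>. norm \<xi> = 1 \<and> norm \<eta> = 1}"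
proof -
  define L where "L = {onorm (elem_op a b x) | x. contraction x}"
  define R where "R = {tgm (Qmat (\<lambda>j. adj (a j)) \<xi>) (Qmat b \<eta>) | \<xi> \<eta>. norm \<xi> = 1 \<and> norm \<eta> = 1}"
  obtain z :: 'h where "z \<noteq> 0" using assms(3) by blast
  then have e: "norm (sgn z) = 1" by (simp add: norm_sgn)
  have "superop_norm (elem_op a b) = Sup L"
    unfolding superop_norm_def L_def by (simp only: bop_onorm_le_1_iff)
  also have "Sup L = Sup R"
  proof (rule cSup_eq_if_mutually_bounded)
    have "contraction (\<lambda>_::'h. 0::'h)" by (simp add: contraction_def clinear_def)
    then show "L \<noteq> {}" by (auto simp: L_def)
    show "R \<noteq> {}" using e by (auto simp: R_def)
    show "bdd_above L"
      unfolding L_def using onorm_elem_op_le[where a = a and b = b, OF assms(1,2)]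
      by (intro bdd_aboveI[of _ "\<Sum>j\<in>UNIV. onorm (a j) * onorm (b j)"]) auto
    show "\<exists>l\<in>L. r \<le> l" if "r \<in> R" for r
      using that tgm_le_onorm_elem_op[where a = a and b = b, OF assms(1,2)]
      unfolding L_def R_def by blast
    show "l \<le> M" if "l \<in> L" and M: "\<And>r. r \<in> R \<Longrightarrow> r \<le> M" for l M
      using that(1) onorm_elem_op_le_tgm_bound[where a = a and b = b, OF assms(1,2) _ e, of _ M] M
      unfolding L_def R_def by blast
  qed
  finally show ?thesis unfolding R_def .
qed

end
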